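(* Let $x_{1:n}\in\mathcal X^n$ ($n\ge1$) have used alphabet size $m$ and counts $n_j$. Let $\beta^*:=m/\ln\frac nm$ if $m<n$, and if $m=n$ let $\beta^*=\infty$, where $S^\infty$ is defined by $S^\infty(x_{t+1}=i\mid x_{1:t})=w^t_i$ if $n^t_i=0$ and $0$ if $n^t_i>0$. Then $$R^{\beta^*}_S(x_{1:n}) \le \mathrm{CL}_w(\mathcal A) - \big(m-\tfrac12\big)\ln m + \sum_{j\in\mathcal A}\tfrac12\ln n_j - \tfrac12\ln n + m\ln\ln\frac{e\,n}{m} + 0.56\,m + 0.082 .$$
   Context: Let $\mathcal X$ be a finite base alphabet. For $x_{1:n}\in\mathcal X^n$, let $n_i$ be the number of occurrences of $i$ in $x_{1:n}$, $\mathcal A=\{x_1,\dots,x_n\}$, $m=|\mathcal A|$. For $0\le t\le n$ let $\mathcal A_t=\{x_1,\dots,x_t\}$ ($\mathcal A_0=\emptyset$), $n^t_i$ the number of occurrences of $i$ in $x_{1:t}$. New-symbol weights: for each $t$ and $i\in\mathcal X\setminus\mathcal A_t$ a number $w^t_i>0$ with $\sum_{k\in\mathcal X\setminus\mathcal A_t}w^t_k\le1$. For constant $\beta>0$, $S^\beta(x_{t+1}=i\mid x_{1:t})=n^t_i/(t+\beta)$ if $n^t_i>0$ and $\beta w^t_i/(t+\beta)$ if $n^t_i=0$; $S^\beta(x_{1:n})=\prod_{t=0}^{n-1}S^\beta(x_{t+1}\mid x_{1:t})$. $\mathrm{CL}_w(\mathcal A):=\sum_{t\in\{0,\dots,n-1\}:\,x_{t+1}\notin\mathcal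 A_t}\ln(1/w^t_{x_{t+1}})$. Redundancy $R^\beta_S(x_{1:n}):=\ln\big(n^{-n}\prod_{j\in\mathcal A}n_j^{n_j}\big)-\ln S^\beta(x_{1:n})$. Natural logarithms; $e$ is Euler's number. *)

theory Defs
  imports Complex_Main
begin

text \<open>The sequence x_{1:n} is modelled by x :: nat => 'a, using the entries x 1, ..., x n.
  The new-symbol weights are w t i (w^t_i).\<close>

definition seen :: "(nat \<Rightarrow> 'a) \<Rightarrow> nat \<Rightarrow> 'a set" where
  "seen x t = x ` {1..t}"

definition cnt :: "(nat \<Rightarrow> 'a) \<Rightarrow> nat \<Rightarrow> 'a \<Rightarrow> nat" where
  "cnt x t i = card {s \<in> {1..t}. x s = i}"

definition S_cond :: "real \<Rightarrow> (nat \<Rightarrow> 'a \<Rightarrow> real) \<Rightarrow> (nat \<Rightarrow> 'a) \<Rightarrow> nat \<Rightarrow> 'a \<Rightarrow> real" where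
  "S_cond \<beta> w x t i =
     (if cnt x t i > 0 then real (cnt x t i) / (real t + \<beta>) else \<beta> * w t i / (real t + \<beta>))"

definition S_seq :: "real \<Rightarrow> (nat \<Rightarrow> 'a \<Rightarrow> real) \<Rightarrow> (nat \<Rightarrow> 'a) \<Rightarrow> nat \<Rightarrow> real" where
  "S_seq \<beta> w x n = (\<Prod>t<n. S_cond \<beta> w x t (x (t + 1)))"

definition S_inf_cond :: "(nat \<Rightarrow> 'a \<Rightarrow> real) \<Rightarrow> (nat \<Rightarrow> 'a) \<Rightarrow> nat \<Rightarrow> 'a \<Rightarrow> real" where
  "S_inf_cond w x t i = (if cnt x t i = 0 then w t i else 0)"

definition S_inf_seq :: "(nat \<Rightarrow> 'a \<Rightarrow> real) \<Rightarrow> (nat \<Rightarrow> 'a) \<Rightarrow> nat \<Rightarrow> real" where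
  "S_inf_seq w x n = (\<Prod>t<n. S_inf_cond w x t (x (t + 1)))"

definition redundancy :: "(nat \<Rightarrow> 'a) \<Rightarrow> nat \<Rightarrow> real \<Rightarrow> real" where
  "redundancy x n P =
     ln (real n powi (- int n) * (\<Prod>j\<in>seen x n. real (cnt x n j) ^ cnt x n j)) - ln P"

definition CL :: "(nat \<Rightarrow> 'a \<Rightarrow> real) \<Rightarrow> (nat \<Rightarrow> 'a) \<Rightarrow> nat \<Rightarrow> real" where
  "CL w x n = (\<Sum>t\<in>{t. t < n \<and> x (t + 1) \<notin> seen x t}. ln (1 / w t (x (t + 1))))"

end

theory Submission
  imports Defs
begin

text \<open>The sequential probability has the closed form
  \<open>\<beta>^m * (\<Prod> weights of new symbols) * (\<Prod>j. (n_j - 1)!) / (\<Prod>t<n. t + \<beta>)\<close>, so the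
  redundancy splits into \<open>CL_w(A)\<close>, the terms \<open>n_j ln n_j - ln (n_j - 1)!\<close> and
  \<open>(\<Sum>t<n. ln (t + \<beta>)) - m ln \<beta>\<close>. Stirling-type bounds, both obtained from
  \<open>1 \<le> (y + 1/2) ln ((y + 1)/y) \<le> 1 + 1/(12 y (y + 1))\<close>, together with
  \<open>(\<Sum>j. 1/n_j) \<ge> m^2/n\<close>, reduce the claim to an inequality in \<open>m\<close> and \<open>n\<close> whose slack is
  \<open>m * hfun (ln (n/m))\<close> plus nonnegative terms. That \<open>hfun\<close> is nonnegative is elementary for
  \<open>L \<le> 1/50\<close> and \<open>L \<ge> 4\<close>; on \<open>[1/50, 4]\<close> it is checked on a partition into small intervals,
  where monotonicity reduces it to rational bounds for \<open>exp\<close> and \<open>ln\<close> at the endpoints,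
  certified by truncated series of \<open>ln ((1 + x)/(1 - x))\<close>. If \<open>m = n\<close>, every symbol is new
  and the redundancy is exactly \<open>CL_w(A) - n ln n\<close>.\<close>

section \<open>Counts and sequential probabilities\<close>

lemma finite_seen: "finite (seen x t)"
  by (simp add: seen_def)

lemma seen_Suc: "seen x (Suc t) = insert (x (Suc t)) (seen x t)"
  by (auto simp: seen_def atLeastAtMostSuc_conv)

lemma card_seen_le: "card (seen x n) \<le> n"
  using card_image_le[of "{1..n}" x] by (simp add: seen_def)

lemma cnt_Suc: "cnt x (Suc t) i = cnt x t i + (if x (Suc t) = i then 1 else 0)"
proof -
  have "{s \<in> {1..Suc t}. x s = i} = {s \<in> {1..t}. x s = i} \<union> (if x (Suc t) = i then {Suc t} else {})"
    by (auto simp: atLeastAtMostSuc_conv)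
  then show ?thesis by (auto simp: cnt_def card_insert_if)
qed

lemma cnt_pos_iff: "0 < cnt x t i \<longleftrightarrow> i \<in> seen x t"
  by (auto simp: cnt_def seen_def card_gt_0_iff)

lemma sum_cnt: "(\<Sum>j\<in>seen x n. cnt x n j) = n"
proof (induction n)
  case 0
  then show ?case by (simp add: seen_def)
next
  case (Suc n)
  let ?i = "x (Suc n)"
  have "(\<Sum>j\<in>seen x (Suc n). cnt x (Suc n) j) = (\<Sum>j\<in>seen x (Suc n). cnt x n j + (if ?i = j then 1 else 0))"
    by (simp add: cnt_Suc)
  also have "\<dots> = (\<Sum>j\<in>seen x (Suc n). cnt x n j) + 1"
    by (simp add: sum.distrib seen_Suc finite_seen)
  also have "(\<Sum>j\<in>seen x (Suc n). cnt x n j) = (\<Sum>j\<in>seen x n. cnt x n j)"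
  proof (cases "?i \<in> seen x n")
    case True
    then show ?thesis by (simp add: seen_Suc insert_absorb)
  next
    case False
    then have "cnt x n ?i = 0" using cnt_pos_iff[of x n ?i] by simp
    with False show ?thesis by (simp add: seen_Suc finite_seen)
  qed
  finally show ?case using Suc.IH by simp
qed

lemma new_steps_Suc:
  "{t. t < Suc n \<and> x (t + 1) \<notin> seen x t}
    = (if x (Suc n) \<in> seen x n then {t. t < n \<and> x (t + 1) \<notin> seen x t}
       else insert n {t. t < n \<and> x (t + 1) \<notin> seen x t})"
  by (auto simp: less_Suc_eq)

lemma prod_fact_cnt_Suc:
  "(\<Prod>j\<in>seen x (Suc n). fact (cnt x (Suc n) j - 1) :: real)
    = (\<Prod>j\<in>seen x n. fact (cnt x n j - 1))
      * (if x (Suc n) \<in> seen x n then real (cnt x n (x (Suc n))) else 1)"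
proof (cases "x (Suc n) \<in> seen x n")
  case True
  let ?i = "x (Suc n)"
  have "(\<Prod>j\<in>seen x n. fact (cnt x (Suc n) j - 1) :: real)
      = (\<Prod>j\<in>seen x n. fact (cnt x n j - 1) * (if j = ?i then real (cnt x n ?i) else 1))"
  proof (rule prod.cong[OF refl])
    fix j assume "j \<in> seen x n"
    show "fact (cnt x (Suc n) j - 1) = fact (cnt x n j - 1) * (if j = ?i then real (cnt x n ?i) else 1)"
      using cnt_pos_iff[of x n ?i] True
      by (cases "cnt x n ?i") (auto simp: cnt_Suc)
  qed
  with True show ?thesis by (simp add: prod.distrib seen_Suc insert_absorb finite_seen)
next
  case False
  then have "cnt x n (x (Suc n)) = 0" using cnt_pos_iff[of x n "x (Suc n)"] by simp
  moreover have "(\<Prod>j\<in>seen x n. fact (cnt x (Suc n) j - 1) :: real) = (\<Prod>j\<in>seen x n. fact (cnt x n j - 1))"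
    using False by (intro prod.cong) (auto simp: cnt_Suc)
  ultimately show ?thesis using False by (simp add: seen_Suc finite_seen cnt_Suc)
qed

lemma S_seq_mult_prod:
  assumes "0 < \<beta>"
  shows "S_seq \<beta> w x n * (\<Prod>t<n. real t + \<beta>)
    = \<beta> ^ card (seen x n) * (\<Prod>t\<in>{t. t < n \<and> x (t + 1) \<notin> seen x t}. w t (x (t + 1)))
      * (\<Prod>j\<in>seen x n. fact (cnt x n j - 1))"
proof (induction n)
  case 0
  then show ?case by (simp add: S_seq_def seen_def)
next
  case (Suc n)
  let ?i = "x (Suc n)"
  have step: "S_cond \<beta> w x n ?i * (real n + \<beta>)
      = (if ?i \<in> seen x n then real (cnt x n ?i) else \<beta> * w n ?i)"
    using assms cnt_pos_iff[of x n ?i] by (simp add: S_cond_def add_nonneg_pos)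
  have "S_seq \<beta> w x (Suc n) * (\<Prod>t<Suc n. real t + \<beta>)
      = (S_seq \<beta> w x n * (\<Prod>t<n. real t + \<beta>)) * (S_cond \<beta> w x n ?i * (real n + \<beta>))"
    by (simp add: S_seq_def)
  also have "\<dots> = \<beta> ^ card (seen x n) * (\<Prod>t\<in>{t. t < n \<and> x (t + 1) \<notin> seen x t}. w t (x (t + 1)))
      * (\<Prod>j\<in>seen x n. fact (cnt x n j - 1))
      * (if ?i \<in> seen x n then real (cnt x n ?i) else \<beta> * w n ?i)"
    by (simp only: Suc.IH step)
  also have "\<dots> = \<beta> ^ card (seen x (Suc n))
      * (\<Prod>t\<in>{t. t < Suc n \<and> x (t + 1) \<notin> seen x t}. w t (x (t + 1)))
      * (\<Prod>j\<in>seen x (Suc n). fact (cnt x (Suc n) j - 1))"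
    unfolding new_steps_Suc prod_fact_cnt_Suc
    by (simp add: seen_Suc finite_seen insert_absorb)
  finally show ?case .
qed

lemma CL_eq_sum_ln:
  assumes "\<And>t. t < n \<Longrightarrow> x (t + 1) \<notin> seen x t \<Longrightarrow> 0 < w t (x (t + 1))"
  shows "CL w x n = - (\<Sum>t\<in>{t. t < n \<and> x (t + 1) \<notin> seen x t}. ln (w t (x (t + 1))))"
  unfolding CL_def sum_negf[symmetric] using assms by (intro sum.cong) (auto simp: ln_div)

lemma ln_S_seq:
  assumes "0 < \<beta>" and w: "\<And>t. t < n \<Longrightarrow> x (t + 1) \<notin> seen x t \<Longrightarrow> 0 < w t (x (t + 1))"
  shows "ln (S_seq \<beta> w x n) = real (card (seen x n)) * ln \<beta> - CL w x n
    + (\<Sum>j\<in>seen x n. ln (fact (cnt x n j - 1))) - (\<Sum>t<n. ln (real t + \<beta>))"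
proof -
  let ?N = "{t. t < n \<and> x (t + 1) \<notin> seen x t}"
  have pos: "0 < (\<Prod>t<n. real t + \<beta>)" "0 < (\<Prod>t\<in>?N. w t (x (t + 1)))"
    "0 < (\<Prod>j\<in>seen x n. fact (cnt x n j - 1) :: real)"
    using assms by (auto intro!: prod_pos add_nonneg_pos)
  have "S_seq \<beta> w x n = S_seq \<beta> w x n * (\<Prod>t<n. real t + \<beta>) / (\<Prod>t<n. real t + \<beta>)"
    by (rule nonzero_mult_div_cancel_right[symmetric]) (use pos(1) in linarith)
  also have "\<dots> = \<beta> ^ card (seen x n) * (\<Prod>t\<in>?N. w t (x (t + 1)))
      * (\<Prod>j\<in>seen x n. fact (cnt x n j - 1)) / (\<Prod>t<n. real t + \<beta>)"
    by (simp only: S_seq_mult_prod[OF assms(1)])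
  finally have "S_seq \<beta> w x n = \<dots>" .
  then have "ln (S_seq \<beta> w x n) = ln (\<beta> ^ card (seen x n)) + ln (\<Prod>t\<in>?N. w t (x (t + 1)))
      + ln (\<Prod>j\<in>seen x n. fact (cnt x n j - 1)) - ln (\<Prod>t<n. real t + \<beta>)"
    using assms(1) pos by (simp only: ln_divide_pos ln_mult_pos mult_pos_pos zero_less_power)
  also have "\<dots> = real (card (seen x n)) * ln \<beta> - CL w x n
      + (\<Sum>j\<in>seen x n. ln (fact (cnt x n j - 1))) - (\<Sum>t<n. ln (real t + \<beta>))"
  proof -
    have "ln (\<Prod>t\<in>?N. w t (x (t + 1))) = (\<Sum>t\<in>?N. ln (w t (x (t + 1))))"
      using w by (intro ln_prod) (auto simp: less_imp_neq[symmetric])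
    also have "\<dots> = - CL w x n" using CL_eq_sum_ln[where n = n and x = x and w = w, OF w] by simp
    finally have "ln (\<Prod>t\<in>?N. w t (x (t + 1))) = - CL w x n" .
    moreover have "ln (\<Prod>t<n. real t + \<beta>) = (\<Sum>t<n. ln (real t + \<beta>))"
      using assms(1) by (intro ln_prod) (auto intro: add_nonneg_pos)
    moreover have "ln (\<Prod>j\<in>seen x n. fact (cnt x n j - 1) :: real)
        = (\<Sum>j\<in>seen x n. ln (fact (cnt x n j - 1)))"
      by (intro ln_prod) (auto simp: finite_seen)
    ultimately show ?thesis using assms(1) by (simp add: ln_realpow)
  qed
  finally show ?thesis .
qed

lemma ln_empirical_likelihood:
  assumes "1 \<le> n"
  shows "ln (real n powi (- int n) * (\<Prod>j\<in>seen x n. real (cnt x n j) ^ cnt x n j))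
    = - real n * ln (real n) + (\<Sum>j\<in>seen x n. real (cnt x n j) * ln (real (cnt x n j)))"
proof -
  have cnt: "j \<in> seen x n \<Longrightarrow> 0 < cnt x n j" for j using cnt_pos_iff[of x n j] by simp
  have "0 < (\<Prod>j\<in>seen x n. real (cnt x n j) ^ cnt x n j)" using cnt by (intro prod_pos) auto
  then show ?thesis
    using assms cnt by (simp add: power_int_minus ln_mult ln_inverse ln_realpow ln_prod finite_seen)
qed

section \<open>Enclosures of the logarithm\<close>

definition ln_ratio_lower :: "real \<Rightarrow> real" where
  "ln_ratio_lower x = 2 * (x + x^3/3 + x^5/5 + x^7/7 + x^9/9 + x^11/11)"

definition ln_ratio_upper :: "real \<Rightarrow> real" where
  "ln_ratio_upper x = 2 * (x + x^3/3 + x^5/5 + x^7/7 + x^9/9) + 2 * x^11 / (11 * (1 - x^2))"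

lemma ln_ratio_lower_le:
  assumes "0 \<le> x" "x < 1"
  shows "ln_ratio_lower x \<le> ln (1 + x) - ln (1 - x)"
proof -
  let ?f = "\<lambda>x. ln (1 + x) - ln (1 - x) - ln_ratio_lower x"
  have "?f 0 \<le> ?f x"
  proof (rule DERIV_nonneg_imp_nondecreasing[OF assms(1)])
    fix t assume t: "0 \<le> t" "t \<le> x"
    with assms have "t < 1" "t * t \<le> t" by (auto intro: mult_left_le)
    then have nz: "1 + t \<noteq> 0" "1 - t \<noteq> 0" "1 - t * t \<noteq> 0" using t by auto
    have "DERIV ?f t :> 1/(1+t) + 1/(1-t) - 2*(1 + t^2 + t^4 + t^6 + t^8 + t^10)"
      unfolding ln_ratio_lower_def
      by (rule derivative_eq_intros refl | use t \<open>t < 1\<close> in simp)+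
    also have "1/(1+t) + 1/(1-t) - 2*(1 + t^2 + t^4 + t^6 + t^8 + t^10) = 2*t^12/((1+t)*(1-t))"
      using nz by (simp add: field_simps) algebra
    finally show "\<exists>y. DERIV ?f t :> y \<and> 0 \<le> y"
      using t \<open>t < 1\<close> by auto
  qed
  then show ?thesis by (simp add: ln_ratio_lower_def)
qed

lemma ln_ratio_upper_ge:
  assumes "0 \<le> x" "x < 1"
  shows "ln (1 + x) - ln (1 - x) \<le> ln_ratio_upper x"
proof -
  let ?f = "\<lambda>x. ln_ratio_upper x - (ln (1 + x) - ln (1 - x))"
  have "?f 0 \<le> ?f x"
  proof (rule DERIV_nonneg_imp_nondecreasing[OF assms(1)])
    fix t assume t: "0 \<le> t" "t \<le> x"
    with assms have "t < 1" "t * t \<le> t" by (auto intro: mult_left_le)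
    then have nz: "1 + t \<noteq> 0" "1 - t \<noteq> 0" "1 - t^2 \<noteq> 0" "11 - 11 * t^2 \<noteq> 0"
      using t by (auto simp: power2_eq_square)
    have "DERIV ?f t :> 2*(1 + t^2 + t^4 + t^6 + t^8)
        + (22*t^10 * (11*(1-t^2)) + 2*t^11*(22*t)) / (11*(1-t^2))^2 - (1/(1+t) + 1/(1-t))"
      unfolding ln_ratio_upper_def
      by (rule derivative_eq_intros refl | use nz t \<open>t < 1\<close> in force)+
        (simp add: power2_eq_square)
    moreover have "2*(1 + t^2 + t^4 + t^6 + t^8)
        + (22*t^10 * (11*(1-t^2)) + 2*t^11*(22*t)) / (11*(1-t^2))^2 - (1/(1+t) + 1/(1-t))
        = 4*t^12 / (11*(1-t^2)^2)"
    proof -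
      define d where "d = 1 - t^2"
      have "1/(1+t) + 1/(1-t) = 2/d"
        using nz by (simp add: d_def field_simps power2_eq_square)
      moreover have "d \<noteq> 0" using nz by (simp add: d_def)
      then have "2*(1 + t^2 + t^4 + t^6 + t^8) + (22*t^10 * (11*d) + 2*t^11*(22*t)) / (11*d)^2
          - 2/d = 4*t^12 / (11*d^2)"
        by (simp add: field_simps power2_eq_square, unfold d_def, algebra)
      ultimately show ?thesis by (simp add: d_def)
    qed
    ultimately show "\<exists>y. DERIV ?f t :> y \<and> 0 \<le> y" by fastforce
  qed
  then show ?thesis by (simp add: ln_ratio_upper_def)
qed

definition ln2_lower :: real where "ln2_lower = 6931470737 / 10000000000"
definition ln2_upper :: real where "ln2_upper = 6931472021 / 10000000000"

lemma ln_eq_ln_ratio: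
  fixes p :: real
  assumes "1 \<le> p"
  shows "ln p = ln (1 + (p - 1)/(p + 1)) - ln (1 - (p - 1)/(p + 1))"
proof -
  have "1 + (p - 1)/(p + 1) = 2*p/(p + 1)" "1 - (p - 1)/(p + 1) = 2/(p + 1)"
    using assms by (auto simp: field_simps)
  then show ?thesis using assms by (simp add: ln_div ln_mult)
qed

lemma ln2_bounds: "ln2_lower \<le> ln 2" "ln 2 \<le> ln2_upper"
proof -
  have "ln_ratio_lower (1/3) \<le> ln 2" "ln 2 \<le> ln_ratio_upper (1/3)"
    using ln_ratio_lower_le[of "1/3"] ln_ratio_upper_ge[of "1/3"] ln_eq_ln_ratio[of 2] by simp_all
  moreover have "ln2_lower \<le> ln_ratio_lower (1/3)" "ln_ratio_upper (1/3) \<le> ln2_upper"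
    by (simp_all add: ln2_lower_def ln2_upper_def ln_ratio_lower_def ln_ratio_upper_def power_divide)
  ultimately show "ln2_lower \<le> ln 2" "ln 2 \<le> ln2_upper" by linarith+
qed

definition ln_point :: "nat \<Rightarrow> real \<Rightarrow> real" where
  "ln_point k x = 2^k * (1 + x) / (1 - x)"

lemma ln_point_pos: "0 \<le> x \<Longrightarrow> x < 1 \<Longrightarrow> 0 < ln_point k x"
  by (simp add: ln_point_def)

lemma ln_point_bounds:
  assumes "0 \<le> x" "x < 1"
  shows "real k * ln2_lower + ln_ratio_lower x \<le> ln (ln_point k x)"
    and "ln (ln_point k x) \<le> real k * ln2_upper + ln_ratio_upper x"
proof -
  have "ln (ln_point k x) = real k * ln 2 + (ln (1 + x) - ln (1 - x))"
    using assms by (simp add: ln_point_def ln_div ln_mult ln_realpow)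
  moreover have "real k * ln2_lower \<le> real k * ln 2" "real k * ln 2 \<le> real k * ln2_upper"
    using ln2_bounds by (simp_all add: mult_left_mono)
  ultimately show "real k * ln2_lower + ln_ratio_lower x \<le> ln (ln_point k x)"
    and "ln (ln_point k x) \<le> real k * ln2_upper + ln_ratio_upper x"
    using ln_ratio_lower_le[OF assms] ln_ratio_upper_ge[OF assms] by linarith+
qed

text \<open>A pair \<open>(x, k)\<close> certifies a rational bound on \<open>ln p\<close> by comparing \<open>p\<close> with
  \<open>ln_point k x\<close>, whose logarithm is enclosed by the truncated series above.\<close>

definition ln_ge_cert :: "real \<times> nat \<Rightarrow> real \<Rightarrow> real \<Rightarrow> bool" where
  "ln_ge_cert c p l \<longleftrightarrow> (case c of (x, k) \<Rightarrow>
     0 \<le> x \<and> x < 1 \<and> ln_point k x \<le> p \<and> l \<le> real k * ln2_lower + ln_ratio_lower x)"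

definition ln_le_cert :: "real \<times> nat \<Rightarrow> real \<Rightarrow> real \<Rightarrow> bool" where
  "ln_le_cert c p u \<longleftrightarrow> (case c of (x, k) \<Rightarrow>
     0 \<le> x \<and> x < 1 \<and> 0 < p \<and> p \<le> ln_point k x \<and> real k * ln2_upper + ln_ratio_upper x \<le> u)"

lemma ln_ge_cert_sound:
  assumes "ln_ge_cert c p l"
  shows "0 < p" "l \<le> ln p"
proof -
  obtain x k where c: "c = (x, k)" by fastforce
  with assms have "0 \<le> x" "x < 1" "ln_point k x \<le> p" by (auto simp: ln_ge_cert_def)
  moreover have "0 < ln_point k x" using ln_point_pos \<open>0 \<le> x\<close> \<open>x < 1\<close> .
  ultimately have "0 < p" "ln (ln_point k x) \<le> ln p" by auto
  then show "0 < p" "l \<le> ln p"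
    using assms ln_point_bounds(1)[of x k] \<open>0 \<le> x\<close> \<open>x < 1\<close> by (auto simp: ln_ge_cert_def c)
qed

lemma ln_le_cert_sound:
  assumes "ln_le_cert c p u"
  shows "0 < p" "ln p \<le> u"
proof -
  obtain x k where c: "c = (x, k)" by fastforce
  with assms have "0 \<le> x" "x < 1" "0 < p" "p \<le> ln_point k x" by (auto simp: ln_le_cert_def)
  then have "ln p \<le> ln (ln_point k x)" by simp
  moreover have "real k * ln2_upper + ln_ratio_upper x \<le> u" using assms by (simp add: ln_le_cert_def c)
  ultimately show "0 < p" "ln p \<le> u"
    using ln_point_bounds(2)[of x k] \<open>0 \<le> x\<close> \<open>x < 1\<close> \<open>0 < p\<close> by linarith+
qed

section \<open>Stirling-type bounds\<close>

lemma ln_ratio_le_cubic: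
  fixes x :: real
  assumes "0 \<le> x" "x < 1"
  shows "ln (1 + x) - ln (1 - x) \<le> 2*x + 2*x^3 / (3*(1 - x^2))"
proof -
  let ?f = "\<lambda>x. 2*x + 2*x^3 / (3*(1 - x^2)) - (ln (1 + x) - ln (1 - x))"
  have "?f 0 \<le> ?f x"
  proof (rule DERIV_nonneg_imp_nondecreasing[OF assms(1)])
    fix t assume t: "0 \<le> t" "t \<le> x"
    with assms have "t < 1" "t * t \<le> t" by (auto intro: mult_left_le)
    then have nz: "1 + t \<noteq> 0" "1 - t \<noteq> 0" "1 - t^2 \<noteq> 0" "3 - 3 * t^2 \<noteq> 0"
      using t by (auto simp: power2_eq_square)
    have "DERIV ?f t :> 2 + (6*t^2 * (3*(1-t^2)) + 2*t^3*(6*t)) / (3*(1-t^2))^2 - (1/(1+t) + 1/(1-t))"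
      by (rule derivative_eq_intros refl | use nz t \<open>t < 1\<close> in force)+
        (simp add: power2_eq_square)
    moreover have "2 + (6*t^2 * (3*(1-t^2)) + 2*t^3*(6*t)) / (3*(1-t^2))^2 - (1/(1+t) + 1/(1-t))
        = 4*t^4 / (3*(1-t^2)^2)"
    proof -
      define d where "d = 1 - t^2"
      have "1/(1+t) + 1/(1-t) = 2/d"
        using nz by (simp add: d_def field_simps power2_eq_square)
      moreover have "d \<noteq> 0" using nz by (simp add: d_def)
      then have "2 + (6*t^2 * (3*d) + 2*t^3*(6*t)) / (3*d)^2 - 2/d = 4*t^4 / (3*d^2)"
        by (simp add: field_simps power2_eq_square, unfold d_def, algebra)
      ultimately show ?thesis by (simp add: d_def)
    qed
    ultimately show "\<exists>y. DERIV ?f t :> y \<and> 0 \<le> y" by fastforce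
  qed
  then show ?thesis by simp
qed

lemma ln_succ_minus_ln_eq:
  fixes y :: real
  assumes "0 < y"
  shows "ln (y + 1) - ln y = ln (1 + 1/(2*y + 1)) - ln (1 - 1/(2*y + 1))"
proof -
  have "1 + 1/(2*y + 1) = (2*(y + 1)) / (2*y + 1)" "1 - 1/(2*y + 1) = (2*y) / (2*y + 1)"
    using assms by (auto simp: field_simps)
  moreover have "ln ((2*(y + 1)) / (2*y + 1)) = ln 2 + ln (y + 1) - ln (2*y + 1)"
    using assms by (simp add: ln_divide_pos ln_mult_pos del: distrib_left_numeral)
  moreover have "ln ((2*y) / (2*y + 1)) = ln 2 + ln y - ln (2*y + 1)"
    using assms by (simp add: ln_divide_pos ln_mult_pos)
  ultimately show ?thesis by simp
qed

lemma one_le_ln_succ_ratio: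
  fixes y :: real
  assumes "0 < y"
  shows "1 \<le> (y + 1/2) * (ln (y + 1) - ln y)"
proof -
  let ?x = "1/(2*y + 1)"
  have x: "0 \<le> ?x" "?x < 1" using assms by (auto simp: field_simps)
  have "2 * ?x \<le> ln_ratio_lower ?x" using x by (simp add: ln_ratio_lower_def)
  then have "2 * ?x \<le> ln (y + 1) - ln y"
    using ln_ratio_lower_le[OF x] ln_succ_minus_ln_eq[OF assms] by linarith
  then have "(y + 1/2) * (2 * ?x) \<le> (y + 1/2) * (ln (y + 1) - ln y)"
    using assms by (intro mult_left_mono) auto
  moreover have "(y + 1/2) * (2 * ?x) = 1" using assms by (simp add: field_simps)
  ultimately show ?thesis by linarith
qed

lemma ln_succ_ratio_le:
  fixes y :: real
  assumes "0 < y"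
  shows "(y + 1/2) * (ln (y + 1) - ln y) \<le> 1 + 1/(12 * y * (y + 1))"
proof -
  define s where "s = 2*y + 1"
  have "1 < s" using assms by (simp add: s_def)
  moreover have "1 < s^2" using \<open>1 < s\<close> by (simp add: one_less_power)
  ultimately have s: "1 < s" "s \<noteq> 0" "s^2 - 1 \<noteq> 0" by linarith+
  have x: "0 \<le> 1/s" "1/s < 1" using s by auto
  have "ln (y + 1) - ln y \<le> 2*(1/s) + 2*(1/s)^3 / (3*(1 - (1/s)^2))"
    using ln_ratio_le_cubic[OF x] ln_succ_minus_ln_eq[OF assms] unfolding s_def by linarith
  then have "(y + 1/2) * (ln (y + 1) - ln y) \<le> (y + 1/2) * (2*(1/s) + 2*(1/s)^3 / (3*(1 - (1/s)^2)))"
    using assms by (intro mult_left_mono) auto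
  also have "\<dots> = 1 + 1/(3*(s^2 - 1))"
  proof -
    have half: "y + 1/2 = s/2" by (simp add: s_def)
    show ?thesis unfolding half using s by (simp add: field_simps power2_eq_square power3_eq_cube)
  qed
  also have "s^2 - 1 = 4*y*(y + 1)" by (simp add: s_def algebra_simps power2_eq_square)
  finally show ?thesis by (simp add: field_simps)
qed

lemma ln_fact_ge:
  assumes "1 \<le> k"
  shows "(real k + 1/2) * ln (real k) - real k + 11/12 + 1/(12 * real k) \<le> ln (fact k)"
  using assms
proof (induction k rule: dec_induct)
  case base
  then show ?case by simp
next
  case (step k)
  have k: "0 < real k" using step by simp
  have "ln (fact (Suc k)) = ln (real k + 1) + ln (fact k)" by (simp add: ln_mult add.commute)
  moreover have "1/(12 * real k) - 1/(12 * (real k + 1)) = 1/(12 * real k * (real k + 1))"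
    using k by (simp add: field_simps)
  ultimately show ?case
    using step.IH ln_succ_ratio_le[OF k] by (simp add: algebra_simps)
qed

lemma mult_ln_minus_ln_fact_le:
  assumes "1 \<le> k"
  shows "real k * ln (real k) - ln (fact (k - 1)) \<le> ln (real k)/2 + real k - 11/12 - 1/(12 * real k)"
proof -
  obtain k' where k: "k = Suc k'" using assms by (cases k) auto
  have "ln (fact k :: real) = ln (real k) + ln (fact (k - 1))" by (simp add: k ln_mult)
  then show ?thesis using ln_fact_ge[OF assms] by (simp add: algebra_simps)
qed

lemma sum_ln_shift_le:
  assumes "0 < \<beta>"
  shows "(\<Sum>t<n. ln (real t + \<beta>))
    \<le> (real n + \<beta> - 1/2) * ln (real n + \<beta>) - (\<beta> - 1/2) * ln \<beta> - real n"
proof (induction n)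
  case 0
  then show ?case by simp
next
  case (Suc n)
  have "0 < real n + \<beta>" using assms by simp
  from one_le_ln_succ_ratio[OF this] Suc.IH show ?case by (simp add: algebra_simps)
qed

lemma card_sq_div_le_sum_inverse:
  fixes c :: "'b \<Rightarrow> real"
  assumes "finite A" "\<And>j. j \<in> A \<Longrightarrow> 0 < c j" "(\<Sum>j\<in>A. c j) = n" "0 < n"
  shows "real (card A)^2 / n \<le> (\<Sum>j\<in>A. 1 / c j)"
proof (cases "A = {}")
  case True
  then show ?thesis by simp
next
  case False
  define k where "k = n / card A"
  have k: "0 < k" using assms False by (simp add: k_def card_gt_0_iff)
  have "2/k - c j/k^2 \<le> 1/c j" if "j \<in> A" for j
  proof -
    have "0 \<le> (c j - k)^2 / (c j * k^2)" using assms(2)[OF that] k by simp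
    also have "\<dots> = 1/c j - (2/k - c j/k^2)"
      using assms(2)[OF that] k by (simp add: field_simps power2_eq_square)
    finally show ?thesis by simp
  qed
  then have "(\<Sum>j\<in>A. 2/k - c j/k^2) \<le> (\<Sum>j\<in>A. 1/c j)" by (intro sum_mono)
  moreover have "(\<Sum>j\<in>A. 2/k - c j/k^2) = card A * (2/k) - n/k^2"
    using assms by (simp add: sum_subtractf sum_divide_distrib[symmetric])
  moreover have "card A * (2/k) - n/k^2 = real (card A)^2 / n"
    using assms False by (simp add: k_def field_simps power2_eq_square card_gt_0_iff)
  ultimately show ?thesis by simp
qed

lemma sum_count_terms_le:
  fixes c :: "'b \<Rightarrow> nat"
  assumes "finite A" "\<And>j. j \<in> A \<Longrightarrow> 1 \<le> c j" "(\<Sum>j\<in>A. c j) = n" "0 < n"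
  shows "(\<Sum>j\<in>A. real (c j) * ln (real (c j)) - ln (fact (c j - 1)))
    \<le> (\<Sum>j\<in>A. ln (real (c j)) / 2) + real n - 11/12 * real (card A)
      - real (card A)^2 / (12 * real n)"
proof -
  have "(\<Sum>j\<in>A. real (c j) * ln (real (c j)) - ln (fact (c j - 1)))
      \<le> (\<Sum>j\<in>A. ln (real (c j)) / 2 + real (c j) - 11/12 - 1/(12 * real (c j)))"
    using assms(2) by (intro sum_mono mult_ln_minus_ln_fact_le)
  also have "\<dots> = (\<Sum>j\<in>A. ln (real (c j)) / 2) + real n - 11/12 * real (card A)
      - (\<Sum>j\<in>A. 1 / real (c j)) / 12"
  proof -
    have "(\<Sum>j\<in>A. 1/(12 * real (c j))) = (\<Sum>j\<in>A. 1 / real (c j)) / 12"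
      unfolding sum_divide_distrib by (intro sum.cong) auto
    moreover have "(\<Sum>j\<in>A. real (c j)) = real n" using assms(3) by (simp flip: of_nat_sum)
    ultimately show ?thesis by (simp add: sum.distrib sum_subtractf)
  qed
  also have "\<dots> \<le> (\<Sum>j\<in>A. ln (real (c j)) / 2) + real n - 11/12 * real (card A)
      - real (card A)^2 / (12 * real n)"
  proof -
    have "real (card A)^2 / real n \<le> (\<Sum>j\<in>A. 1 / real (c j))"
      using assms by (intro card_sq_div_le_sum_inverse) (auto simp: Suc_le_eq simp flip: of_nat_sum)
    then show ?thesis by simp
  qed
  finally show ?thesis .
qed

section \<open>Nonnegativity of the slack function\<close>

lemma one_plus_inverse_mult_ln_mono:
  fixes x y :: real
  assumes "0 < x" "x \<le> y"
  shows "(1 + 1/x) * ln x \<le> (1 + 1/y) * ln y"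
proof (rule DERIV_nonneg_imp_nondecreasing[OF assms(2)])
  fix t assume "x \<le> t" "t \<le> y"
  with assms have t: "0 < t" by simp
  have "DERIV (\<lambda>t. (1 + 1/t) * ln t) t :> - (1/t^2) * ln t + (1 + 1/t) * (1/t)"
    by (rule derivative_eq_intros refl | use t in \<open>force simp: power2_eq_square\<close>)+
  moreover have "- (1/t^2) * ln t + (1 + 1/t) * (1/t) = (t + 1 - ln t) / t^2"
    using t by (simp add: field_simps power2_eq_square)
  moreover have "ln t \<le> t - 1" using t by (rule ln_le_minus_one)
  ultimately show "\<exists>d. DERIV (\<lambda>t. (1 + 1/t) * ln t) t :> d \<and> 0 \<le> d" by fastforce
qed

lemma ln_one_plus_inverse:
  fixes x :: real
  assumes "0 < x"
  shows "ln (1 + 1/x) = ln (1 + x) - ln x"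
proof -
  have "1 + 1/x = (1 + x) / x" using assms by (simp add: field_simps)
  then show ?thesis using assms by (simp add: ln_div)
qed

lemma one_plus_mult_ln_one_plus_inverse_antimono:
  fixes x y :: real
  assumes "0 < x" "x \<le> y"
  shows "(1 + y) * ln (1 + 1/y) \<le> (1 + x) * ln (1 + 1/x)"
proof -
  let ?f = "\<lambda>z. (1 + z) * (ln (1 + z) - ln z)"
  have "?f y \<le> ?f x"
  proof (rule DERIV_nonpos_imp_nonincreasing[OF assms(2)])
    fix t assume "x \<le> t" "t \<le> y"
    with assms have t: "0 < t" by simp
    have "0 < t + t * t" using t by (simp add: add_pos_pos)
    then have "(1 + t) * (1/(1 + t) - 1/t) = - 1/t"
      using t by (simp add: field_simps)
    moreover have "DERIV ?f t :> (ln (1 + t) - ln t) + (1 + t) * (1/(1 + t) - 1/t)"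
      by (rule derivative_eq_intros refl | use t in simp)+
    ultimately have "DERIV ?f t :> ln (1 + 1/t) - 1/t"
      using t by (simp add: ln_one_plus_inverse)
    moreover have "ln (1 + 1/t) \<le> 1/t" using t by (intro ln_add_one_self_le_self) simp
    ultimately show "\<exists>d. DERIV ?f t :> d \<and> d \<le> 0" by fastforce
  qed
  then show ?thesis using assms by (simp add: ln_one_plus_inverse)
qed

text \<open>For \<open>L = ln (n/m)\<close>, \<open>m * hfun L\<close> bounds from below the slack in the final estimate
  of the redundancy.\<close>

definition hfun :: "real \<Rightarrow> real" where
  "hfun L = 14/25 - 1/12 + exp (- L) / 12 + ln (1 + L) - (1 + 1/L) * ln L
     - (1 + L * exp L) * ln (1 + 1 / (L * exp L)) / L"

text \<open>For small \<open>L\<close> the last two terms of \<open>hfun\<close> are large and nearly cancel; this form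
  avoids the cancellation.\<close>

lemma hfun_alt:
  assumes "0 < L"
  shows "hfun L = 1 + 14/25 - 1/12 + exp (- L) / 12 + ln (1 + L) + (exp L - 1) * ln L
    + L * exp L - (1 + L * exp L) * ln (1 + L * exp L) / L"
proof -
  define z where "z = L * exp L"
  have "0 < z" using assms by (simp add: z_def)
  moreover have "ln z = ln L + L" using assms by (simp add: z_def ln_mult)
  ultimately have ln_z: "ln (1 + 1/z) = ln (1 + z) - ln L - L" by (simp add: ln_one_plus_inverse)
  have "(1 + z) * ln (1 + 1/z) / L = (1 + z) * ln (1 + z) / L - (1/L + exp L) * ln L - (1 + z)"
    using assms unfolding ln_z by (simp add: z_def field_simps)
  then show ?thesis by (simp add: hfun_def z_def[symmetric] algebra_simps)
qed

lemma exp_le_of_le_ln: "0 < p \<Longrightarrow> b \<le> ln p \<Longrightarrow> exp b \<le> p" for p :: real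
  using exp_le_cancel_iff[of b "ln p"] by simp

lemma le_exp_of_ln_le: "0 < p \<Longrightarrow> ln p \<le> a \<Longrightarrow> p \<le> exp a" for p :: real
  using exp_le_cancel_iff[of "ln p" a] by simp

lemma hfun_nonneg_of_bounds:
  assumes "0 < a" "a \<le> L" "L \<le> b" "exp b \<le> FB" "LA \<le> ln (1 + a)" "ln b \<le> UB"
    "0 < EA" "EA \<le> exp a" "ln (1 + 1/(a * EA)) \<le> UQ"
    "0 \<le> 14/25 - 1/12 + 1/(12 * FB) + LA - (1 + 1/b) * UB - (1 + a * EA) * UQ / a"
  shows "0 \<le> hfun L"
proof -
  have L: "0 < L" using assms by simp
  have "1/FB \<le> exp (- b)" using assms(4) by (simp add: exp_minus inverse_eq_divide frac_le)
  also have "\<dots> \<le> exp (- L)" using assms(3) by simp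
  finally have exp_term: "1/(12 * FB) \<le> exp (- L) / 12" by simp
  have "ln (1 + a) \<le> ln (1 + L)" using assms(1,2) by simp
  with assms(5) have ln_term: "LA \<le> ln (1 + L)" by linarith
  have "(1 + 1/L) * ln L \<le> (1 + 1/b) * ln b" by (rule one_plus_inverse_mult_ln_mono[OF L assms(3)])
  also have "\<dots> \<le> (1 + 1/b) * UB" using assms(1-3,6) by (intro mult_left_mono) auto
  finally have lnL_term: "(1 + 1/L) * ln L \<le> (1 + 1/b) * UB" .
  define z where "z = L * exp L"
  have z: "0 < z" using L by (simp add: z_def)
  have "EA \<le> exp L" using assms(2,8) by (meson exp_le_cancel_iff order.trans)
  then have "a * EA \<le> z" unfolding z_def using assms(1,2,7) by (intro mult_mono) auto
  have "0 < a * EA" using assms by simp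
  then have antimono: "(1 + z) * ln (1 + 1/z) \<le> (1 + a * EA) * ln (1 + 1/(a * EA))"
    using \<open>a * EA \<le> z\<close> by (rule one_plus_mult_ln_one_plus_inverse_antimono)
  have "0 \<le> (1 + z) * ln (1 + 1/z)"
    using z by (intro mult_nonneg_nonneg ln_ge_zero) auto
  then have "(1 + z) * ln (1 + 1/z) / L \<le> (1 + z) * ln (1 + 1/z) / a"
    using assms(1,2) by (intro divide_left_mono) auto
  also have "\<dots> \<le> (1 + a * EA) * ln (1 + 1/(a * EA)) / a"
    using antimono assms(1) by (intro divide_right_mono) auto
  also have "\<dots> \<le> (1 + a * EA) * UQ / a"
    using assms(1,7,9) by (intro divide_right_mono mult_left_mono) auto
  finally have z_term: "(1 + z) * ln (1 + 1/z) / L \<le> (1 + a * EA) * UQ / a" .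
  have "14/25 - 1/12 + 1/(12 * FB) + LA - (1 + 1/b) * UB - (1 + a * EA) * UQ / a \<le> hfun L"
    unfolding hfun_def z_def[symmetric]
    using exp_term ln_term lnL_term z_term by (intro add_mono diff_mono order.refl)
  then show ?thesis using assms(10) by (rule order.trans[rotated])
qed

lemma hfun_nonneg_of_bounds_alt:
  assumes "0 < a" "a \<le> L" "L \<le> b" "b \<le> 1" "exp b \<le> FB" "LA \<le> ln (1 + a)"
    "0 < EA" "EA \<le> exp a" "LNA \<le> ln a" "ln (1 + b * FB) \<le> UZ"
    "0 \<le> 1 + 14/25 - 1/12 + 1/(12 * FB) + LA + (FB - 1) * LNA + a * EA - (1 + b * FB) * UZ / a"
  shows "0 \<le> hfun L"
proof -
  have L: "0 < L" using assms by simp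
  have "1/FB \<le> exp (- b)" using assms(5) by (simp add: exp_minus inverse_eq_divide frac_le)
  also have "\<dots> \<le> exp (- L)" using assms(3) by simp
  finally have exp_term: "1/(12 * FB) \<le> exp (- L) / 12" by simp
  have "ln (1 + a) \<le> ln (1 + L)" using assms(1,2) by simp
  with assms(6) have ln_term: "LA \<le> ln (1 + L)" by linarith
  have "ln a \<le> ln L" using assms(1,2) by simp
  with assms(9) have lnL: "LNA \<le> ln L" "ln L \<le> 0" using assms(3,4) L by auto
  have "exp L \<le> FB" using assms(3,5) by (meson exp_le_cancel_iff order.trans)
  then have expL: "0 \<le> exp L - 1" "exp L - 1 \<le> FB - 1" using L by auto
  have "(FB - 1) * LNA \<le> (exp L - 1) * LNA" using expL lnL by (intro mult_right_mono_neg) auto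
  also have "\<dots> \<le> (exp L - 1) * ln L" using expL lnL by (intro mult_left_mono) auto
  finally have lnL_term: "(FB - 1) * LNA \<le> (exp L - 1) * ln L" .
  have "EA \<le> exp L" using assms(2,8) by (meson exp_le_cancel_iff order.trans)
  then have z_lower: "a * EA \<le> L * exp L" using assms(1,2,7) by (intro mult_mono) auto
  have "L * exp L \<le> b * FB"
    using L assms(3) \<open>exp L \<le> FB\<close> by (intro mult_mono) auto
  moreover have "0 \<le> L * exp L" using L by simp
  ultimately have z: "0 \<le> L * exp L" "L * exp L \<le> b * FB" by simp_all
  then have "ln (1 + L * exp L) \<le> ln (1 + b * FB)" by simp
  with assms(10) have "ln (1 + L * exp L) \<le> UZ" by linarith
  then have "(1 + L * exp L) * ln (1 + L * exp L) \<le> (1 + b * FB) * UZ"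
    using z by (intro mult_mono ln_ge_zero) simp_all
  moreover have "0 \<le> (1 + L * exp L) * ln (1 + L * exp L)"
    using z by (intro mult_nonneg_nonneg ln_ge_zero) auto
  ultimately have "(1 + L * exp L) * ln (1 + L * exp L) / L
      \<le> (1 + L * exp L) * ln (1 + L * exp L) / a"
    using assms(1,2) by (intro divide_left_mono) auto
  also have "\<dots> \<le> (1 + b * FB) * UZ / a"
    using \<open>_ \<le> (1 + b * FB) * UZ\<close> assms(1) by (intro divide_right_mono) auto
  finally have z_term: "(1 + L * exp L) * ln (1 + L * exp L) / L \<le> (1 + b * FB) * UZ / a" .
  have "1 + 14/25 - 1/12 + 1/(12 * FB) + LA + (FB - 1) * LNA + a * EA - (1 + b * FB) * UZ / a
      \<le> hfun L"
    unfolding hfun_alt[OF L]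
    using exp_term ln_term lnL_term z_lower z_term by (intro add_mono diff_mono order.refl)
  then show ?thesis using assms(11) by (rule order.trans[rotated])
qed

type_synonym hfun_cert =
  "real \<times> real \<times> real \<times> real \<times> real \<times>
   (real \<times> nat) \<times> (real \<times> nat) \<times> (real \<times> nat) \<times> (real \<times> nat) \<times> (real \<times> nat)"

definition hfun_cert_valid :: "real \<Rightarrow> real \<Rightarrow> hfun_cert \<Rightarrow> bool" where
  "hfun_cert_valid a b = (\<lambda>(FB, LA, UB, EA, UQ, cF, cA, cB, cE, cQ).
     0 < a \<and> a \<le> b \<and> ln_ge_cert cF FB b \<and> ln_ge_cert cA (1 + a) LA \<and>
     (if b < 1 then ln_ge_cert cB (1/b) (- UB) else ln_le_cert cB b UB) \<and>
     ln_le_cert cE EA a \<and> ln_le_cert cQ (1 + 1/(a * EA)) UQ \<and>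
     0 \<le> 14/25 - 1/12 + 1/(12 * FB) + LA - (1 + 1/b) * UB - (1 + a * EA) * UQ / a)"

definition hfun_alt_cert_valid :: "real \<Rightarrow> real \<Rightarrow> hfun_cert \<Rightarrow> bool" where
  "hfun_alt_cert_valid a b = (\<lambda>(FB, LA, EA, LNA, UZ, cF, cA, cE, cN, cU).
     0 < a \<and> a \<le> b \<and> b \<le> 1 \<and> ln_ge_cert cF FB b \<and> ln_ge_cert cA (1 + a) LA \<and>
     ln_le_cert cE EA a \<and> ln_le_cert cN (1/a) (- LNA) \<and> ln_le_cert cU (1 + b * FB) UZ \<and>
     0 \<le> 1 + 14/25 - 1/12 + 1/(12 * FB) + LA + (FB - 1) * LNA + a * EA - (1 + b * FB) * UZ / a)"

lemma hfun_cert_valid_nonneg: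
  assumes "hfun_cert_valid a b c" "a \<le> L" "L \<le> b"
  shows "0 \<le> hfun L"
proof -
  obtain FB LA UB EA UQ cF cA cB cE cQ where c: "c = (FB, LA, UB, EA, UQ, cF, cA, cB, cE, cQ)"
    by (metis prod.exhaust)
  note valid = assms(1)[unfolded c hfun_cert_valid_def, simplified]
  have "ln b \<le> UB"
  proof (cases "b < 1")
    case True
    then have "ln_ge_cert cB (1/b) (- UB)" using valid by simp
    then have "0 < 1/b" "- UB \<le> ln (1/b)" by (rule ln_ge_cert_sound)+
    then show ?thesis by (simp add: ln_div)
  next
    case False
    then have "ln_le_cert cB b UB" using valid by simp
    then show ?thesis by (rule ln_le_cert_sound)
  qed
  moreover have "0 < FB" "b \<le> ln FB" "LA \<le> ln (1 + a)" "0 < EA" "ln EA \<le> a"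
    "ln (1 + 1/(a * EA)) \<le> UQ"
    using valid by (blast dest: ln_ge_cert_sound ln_le_cert_sound)+
  ultimately show ?thesis
    using valid assms(2,3) exp_le_of_le_ln[of FB b] le_exp_of_ln_le[of EA a]
    by (intro hfun_nonneg_of_bounds[of a L b FB LA UB EA UQ]) auto
qed

lemma hfun_alt_cert_valid_nonneg:
  assumes "hfun_alt_cert_valid a b c" "a \<le> L" "L \<le> b"
  shows "0 \<le> hfun L"
proof -
  obtain FB LA EA LNA UZ cF cA cE cN cU where c: "c = (FB, LA, EA, LNA, UZ, cF, cA, cE, cN, cU)"
    by (metis prod.exhaust)
  note valid = assms(1)[unfolded c hfun_alt_cert_valid_def, simplified]
  have "0 < 1/a" "ln (1/a) \<le> - LNA" using valid by (blast dest: ln_le_cert_sound)+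
  then have "LNA \<le> ln a" by (simp add: ln_div)
  moreover have "0 < FB" "b \<le> ln FB" "LA \<le> ln (1 + a)" "0 < EA" "ln EA \<le> a"
    "ln (1 + b * FB) \<le> UZ"
    using valid by (blast dest: ln_ge_cert_sound ln_le_cert_sound)+
  ultimately show ?thesis
    using valid assms(2,3) exp_le_of_le_ln[of FB b] le_exp_of_ln_le[of EA a]
    by (intro hfun_nonneg_of_bounds_alt[of a L b FB LA EA LNA UZ]) auto
qed

inductive interval_chain :: "(real \<Rightarrow> real \<Rightarrow> 'c \<Rightarrow> bool) \<Rightarrow> real \<Rightarrow> (real \<times> 'c) list \<Rightarrow> bool"
  for V :: "real \<Rightarrow> real \<Rightarrow> 'c \<Rightarrow> bool" where
  Nil: "interval_chain V p []"
| Cons: "V p q c \<Longrightarrow> interval_chain V q rows \<Longrightarrow> interval_chain V p ((q, c) # rows)"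

lemma interval_chain_cover:
  assumes "interval_chain V p rows"
    and "\<And>a b c L. V a b c \<Longrightarrow> a \<le> L \<Longrightarrow> L \<le> b \<Longrightarrow> P L"
    and "rows \<noteq> []" "p \<le> L" "L \<le> fst (last rows)"
  shows "P L"
  using assms(1,3-5)
proof (induction rule: interval_chain.induct)
  case Nil
  then show ?case by simp
next
  case (Cons p q c rows)
  show ?case
  proof (cases "L \<le> q")
    case True
    show ?thesis using assms(2)[OF Cons.hyps(1) Cons.prems(2) True] .
  next
    case False
    with Cons.prems(3) have "rows \<noteq> []" by auto
    with False Cons.prems(3) show ?thesis by (intro Cons.IH) auto
  qed
qed

lemmas ln_cert_defs = ln_ge_cert_def ln_le_cert_def ln_point_def ln_ratio_lower_def
  ln_ratio_upper_def ln2_lower_def ln2_upper_def power_divide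

text \<open>The certificates below were computed numerically. A row \<open>(b, FB, LA, \<dots>)\<close> covers the
  interval from the previous endpoint \<open>a\<close> to \<open>b\<close>; its entries are the rational bounds named as
  in \<open>hfun_alt_cert_valid\<close> resp. \<open>hfun_cert_valid\<close>, followed by the pairs certifying them.\<close>

lemma hfun_nonneg_from_1_50:
  assumes "1/50 \<le> L" "L \<le> 37/100"
  shows "0 \<le> hfun L"
proof (rule interval_chain_cover[OF _ hfun_alt_cert_valid_nonneg])
  show "interval_chain hfun_alt_cert_valid (1/50) [
      (7/250, 66455/64617, 309/15625, 33095/32441, -39120247/10000000, 142069/5000000,
       (919/65536, 0), (81/8192, 0), (327/32768, 0), (7193/32768, 5), (931/65536, 0)),
      (19/500, 66783/64289, 34487/1250000, 16613/16155, -3575557/1000000, 387317/10000000,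
       (1247/65536, 0), (113/8192, 0), (229/16384, 0), (3595/65536, 5), (1269/65536, 0)),
      (51/1000, 8401/7983, 186331/5000000, 16695/16073, -52323/16000, 261443/5000000,
       (209/8192, 0), (1221/65536, 0), (311/16384, 0), (15977/65536, 4), (1713/65536, 0)),
      (33/500, 67699/63373, 497233/10000000, 67205/63867, -29759541/10000000, 85177/1250000,
       (2163/65536, 0), (1629/65536, 0), (1669/65536, 0), (6641/65536, 4), (279/8192, 0)),
      (21/250, 1067/981, 12779/200000, 4231/3961, -27181309/10000000, 874581/10000000,
       (43/1024, 0), (2093/65536, 0), (135/4096, 0), (20245/65536, 3), (179/4096, 0)),
      (13/125, 34471/31065, 161281/2000000, 68285/62787, -12384797/5000000, 546197/5000000,
       (1703/32768, 0), (2641/65536, 0), (2749/65536, 0), (12857/65536, 3), (447/8192, 0)),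
      (1/8, 17407/15361, 98927/1000000, 68939/62133, -22633691/10000000, 165609/1250000,
       (1023/16384, 0), (3239/65536, 0), (3403/65536, 0), (3005/32768, 3), (4335/65536, 0)),
      (147/1000, 35173/30363, 294453/2500000, 69625/61447, -20794417/10000000, 1572753/10000000,
       (2405/32768, 0), (3855/65536, 0), (4089/65536, 0), (0, 3), (5143/65536, 0)),
      (169/1000, 35531/30005, 1371469/10000000, 70343/60729, -19173541/10000000, 1824503/10000000,
       (2763/32768, 0), (4487/65536, 0), (4807/65536, 0), (4251/16384, 2), (2981/32768, 0)),
      (191/1000, 71777/59295, 1561391/10000000, 71059/60013, -4444701/2500000, 65007/312500,
       (6241/65536, 0), (2553/32768, 0), (5523/65536, 0), (6335/32768, 2), (849/8192, 0)),
      (213/1000, 72491/58581, 349581/2000000, 35887/29649, -3310973/2000000, 1169859/5000000,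
       (6955/65536, 0), (5713/65536, 0), (3119/32768, 0), (137/1024, 2), (477/4096, 0)),
      (47/200, 73203/57869, 965359/5000000, 9061/7323, -1933109/1250000, 2602791/10000000,
       (7667/65536, 0), (6307/65536, 0), (869/8192, 0), (2619/32768, 2), (8481/65536, 0)),
      (32/125, 73881/57191, 2110459/10000000, 4575/3617, -14481733/10000000, 142871/500000,
       (8345/65536, 0), (3445/32768, 0), (479/4096, 0), (2027/65536, 2), (2325/16384, 0)),
      (277/1000, 74557/56515, 2279101/10000000, 36939/28597, -13625837/10000000, 97339/312500,
       (9021/65536, 0), (1859/16384, 0), (4171/32768, 0), (661/2048, 1), (10125/65536, 0)),
      (297/1000, 75199/55873, 305621/1250000, 37277/28259, -6418703/5000000, 26273/78125,
       (9663/65536, 0), (1993/16384, 0), (4509/32768, 0), (18809/65536, 1), (10917/65536, 0)),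
      (79/250, 75807/55265, 2600307/10000000, 18799/13969, -6070221/5000000, 1800519/5000000,
       (10271/65536, 0), (8473/65536, 0), (2415/16384, 0), (16693/65536, 1), (5837/32768, 0)),
      (67/200, 76413/54659, 2745697/10000000, 18951/13817, -576011/500000, 3841413/10000000,
       (10877/65536, 0), (8941/65536, 0), (2567/16384, 0), (7389/32768, 1), (12435/65536, 0)),
      (353/1000, 38493/27043, 1444597/5000000, 38205/27331, -5468247/5000000, 4071121/10000000,
       (5725/32768, 0), (4701/32768, 0), (5437/32768, 0), (12951/65536, 1), (13159/65536, 0)),
      (37/100, 77525/53547, 755749/2500000, 76983/54089, -81353/78125, 2145037/5000000,
       (11989/65536, 0), (9831/65536, 0), (11447/65536, 0), (11295/65536, 1), (6923/32768, 0))]"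
    by (intro interval_chain.intros; simp add: hfun_alt_cert_valid_def ln_cert_defs)
qed (use assms in simp_all)

lemma hfun_nonneg_from_37_100:
  assumes "37/100 \<le> L" "L \<le> 3/5"
  shows "0 \<le> hfun L"
proof (rule interval_chain_cover[OF _ hfun_alt_cert_valid_nonneg])
  show "interval_chain hfun_alt_cert_valid (37/100) [
      (387/1000, 78063/53009, 629599/2000000, 38761/26775, -4971303/5000000, 902073/2000000,
       (12527/65536, 0), (10231/65536, 0), (5993/32768, 0), (9793/65536, 1), (7267/32768, 0)),
      (403/1000, 78567/52505, 1635679/5000000, 19515/13253, -1898723/2000000, 2359579/5000000,
       (13031/65536, 0), (10625/65536, 0), (3131/16384, 0), (4175/32768, 1), (15183/65536, 0)),
      (209/500, 79039/52033, 3385861/10000000, 19641/13127, -1136029/1250000, 491633/1000000,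
       (13503/65536, 0), (5495/32768, 0), (3257/16384, 0), (55/512, 1), (15793/65536, 0)),
      (433/1000, 19877/12891, 698481/2000000, 19759/13009, -4361373/5000000, 2557221/5000000,
       (3493/16384, 0), (11329/65536, 0), (3375/16384, 0), (2927/32768, 1), (16403/65536, 0)),
      (447/1000, 39973/25563, 359757/1000000, 79505/51567, -8370413/10000000, 1060091/2000000,
       (7205/32768, 0), (11663/65536, 0), (13969/65536, 0), (4707/65536, 1), (16973/65536, 0)),
      (461/1000, 40191/25345, 3694723/10000000, 79943/51129, -2013007/2500000, 685921/1250000,
       (7423/32768, 0), (11971/65536, 0), (14407/65536, 0), (917/16384, 1), (17543/65536, 0)),
      (237/500, 80785/50287, 37911/100000, 80379/50693, -3871843/5000000, 5661677/10000000,
       (15249/65536, 0), (3069/16384, 0), (14843/65536, 0), (665/16384, 1), (2259/8192, 0)),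
      (487/1000, 81187/49885, 3879731/10000000, 40391/25145, -7465657/10000000, 1459207/2500000,
       (15651/65536, 0), (3139/16384, 0), (7623/32768, 0), (875/32768, 1), (18601/65536, 0)),
      (499/1000, 40779/24757, 99189/250000, 2537/1559, -179879/250000, 5999179/10000000,
       (8011/32768, 0), (12833/65536, 0), (489/2048, 0), (27/2048, 1), (19089/65536, 0)),
      (511/1000, 81927/49145, 505989/1250000, 81555/49517, -3475807/5000000, 3080983/5000000,
       (16391/65536, 0), (6543/32768, 0), (16019/65536, 0), (33/32768, 1), (2447/8192, 0)),
      (261/500, 10283/6101, 4127437/10000000, 20481/12287, -671413/1000000, 3155873/5000000,
       (2091/8192, 0), (1667/8192, 0), (4097/16384, 0), (10605/32768, 0), (10011/32768, 0)),
      (533/1000, 82601/48471, 4200077/10000000, 82261/48811, -3250563/5000000, 3231107/5000000,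
       (17065/65536, 0), (3391/16384, 0), (16725/65536, 0), (20583/65536, 0), (5117/16384, 0)),
      (68/125, 10367/6017, 1068047/2500000, 41299/24237, -3146283/5000000, 6613053/10000000,
       (2175/8192, 0), (6895/32768, 0), (8531/32768, 0), (19965/65536, 0), (20913/65536, 0)),
      (277/500, 10405/5979, 542931/1250000, 82933/48139, -6088331/10000000, 10801/16000,
       (2213/8192, 0), (14013/65536, 0), (17397/65536, 0), (4839/16384, 0), (21317/65536, 0)),
      (141/250, 10443/5941, 1102023/2500000, 83237/47835, -2952967/5000000, 6888473/10000000,
       (2251/8192, 0), (14215/65536, 0), (17701/65536, 0), (18809/65536, 0), (2715/8192, 0)),
      (287/500, 41923/23613, 894437/2000000, 83541/47531, -2863567/5000000, 54896/78125,
       (9155/32768, 0), (14415/65536, 0), (18005/65536, 0), (9135/32768, 0), (39/8192, 1)),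
      (583/1000, 42059/23477, 283503/625000, 83843/47229, -2775763/5000000, 7151513/10000000,
       (9291/32768, 0), (7307/32768, 0), (18307/65536, 0), (8869/32768, 0), (721/65536, 1)),
      (74/125, 84389/46683, 4592927/10000000, 84115/46957, -1348941/2500000, 1455271/2000000,
       (18853/65536, 0), (14791/65536, 0), (18579/65536, 0), (1079/4096, 0), (565/32768, 1)),
      (3/5, 84629/46443, 4649879/10000000, 42193/23343, -5242599/10000000, 7387789/10000000,
       (19093/65536, 0), (1871/8192, 0), (9425/32768, 0), (4199/16384, 0), (1495/65536, 1))]"
    by (intro interval_chain.intros; simp add: hfun_alt_cert_valid_def ln_cert_defs)
qed (use assms in simp_all)

lemma hfun_nonneg_from_3_5:
  assumes "3/5 \<le> L" "L \<le> 1047/1000"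
  shows "0 \<le> hfun L"
proof (rule interval_chain_cover[OF _ hfun_cert_valid_nonneg])
  show "interval_chain hfun_cert_valid (3/5) [
      (123/200, 42539/22997, 4699813/10000000, -4861287/10000000, 42313/23223, 406003/625000,
       (9771/32768, 0), (15123/65536, 0), (15623/65536, 0), (9545/32768, 0), (2571/8192, 0)),
      (63/100, 85525/45547, 479307/1000000, -4620267/10000000, 85075/45997, 315419/500000,
       (19989/65536, 0), (3853/16384, 0), (3719/16384, 0), (19539/65536, 0), (5003/16384, 0)),
      (129/200, 85969/45103, 4885561/10000000, -54813/125000, 42761/22775, 6127137/10000000,
       (20433/65536, 0), (7849/32768, 0), (14143/65536, 0), (9993/32768, 0), (1217/4096, 0)),
      (661/1000, 43221/22315, 1244321/2500000, -827971/2000000, 42983/22553, 238101/400000,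
       (10453/32768, 0), (15981/65536, 0), (13375/65536, 0), (10215/32768, 0), (18949/65536, 0)),
      (677/1000, 86911/44161, 5074091/10000000, -975161/2500000, 86439/44633, 5772827/10000000,
       (21375/65536, 0), (16279/65536, 0), (6311/32768, 0), (20903/65536, 0), (2301/8192, 0)),
      (693/1000, 87379/43693, 5169827/10000000, -916737/2500000, 21727/11041, 1119993/2000000,
       (21843/65536, 0), (16573/65536, 0), (11883/65536, 0), (5343/16384, 0), (17885/65536, 0)),
      (709/1000, 132114/65015, 1052963/2000000, -429869/1250000, 5461/2731, 5432839/10000000,
       (521/65536, 1), (527/2048, 0), (11159/65536, 0), (1365/4096, 0), (17377/65536, 0)),
      (29/40, 133162/64491, 5359053/10000000, -643119/2000000, 66054/32509, 2636003/5000000,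
       (1045/65536, 1), (67/256, 0), (10447/65536, 0), (259/32768, 1), (8443/32768, 0)),
      (741/1000, 134210/63967, 545221/1000000, -14987/50000, 66578/32247, 5116721/10000000,
       (1569/65536, 1), (4359/16384, 0), (9749/65536, 0), (521/32768, 1), (8205/32768, 0)),
      (379/500, 67662/31705, 5544281/10000000, -1385289/5000000, 67102/31985, 4966903/10000000,
       (1063/32768, 1), (4429/16384, 0), (9021/65536, 0), (783/32768, 1), (15949/65536, 0)),
      (31/40, 68218/31427, 2820767/5000000, -637201/2500000, 135318/63413, 4813427/10000000,
       (1341/32768, 1), (18011/65536, 0), (8307/65536, 0), (2123/65536, 1), (15475/65536, 0)),
      (99/125, 68774/31149, 5737723/10000000, -2331673/10000000, 136430/62857, 4665659/10000000,
       (1619/32768, 1), (9151/32768, 0), (3803/32768, 0), (2679/65536, 1), (15017/65536, 0)),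
      (809/1000, 69330/30871, 729147/1250000, -2119409/10000000, 137542/62301, 904641/2000000,
       (1897/32768, 1), (9295/32768, 0), (6919/65536, 0), (3235/65536, 1), (7287/32768, 0)),
      (413/500, 34942/15297, 5927557/10000000, -955657/5000000, 138654/61745, 2192841/5000000,
       (1087/16384, 1), (9437/32768, 0), (1561/16384, 0), (3791/65536, 1), (14145/65536, 0)),
      (843/1000, 140878/60633, 3010597/5000000, -426907/2500000, 139762/61191, 2126517/5000000,
       (4903/65536, 1), (19155/65536, 0), (2791/32768, 0), (4345/65536, 1), (6865/32768, 0)),
      (43/50, 8874/3755, 6113749/10000000, -753989/5000000, 35218/15159, 412521/1000000,
       (341/4096, 1), (2429/8192, 0), (1233/16384, 0), (1225/16384, 1), (13329/65536, 0)),
      (877/1000, 143090/59527, 6205553/10000000, -82019/625000, 141978/60083, 2000923/5000000,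
       (6009/65536, 1), (9853/32768, 0), (2147/32768, 0), (5453/65536, 1), (12941/65536, 0)),
      (447/500, 144194/58975, 6296601/10000000, -1120249/10000000, 71542/29765, 3882583/10000000,
       (6561/65536, 1), (19977/65536, 0), (3667/65536, 0), (3003/32768, 1), (12565/65536, 0)),
      (911/1000, 18162/7303, 6386891/10000000, -93207/1000000, 72094/29489, 1883851/5000000,
       (889/8192, 1), (20245/65536, 0), (763/16384, 0), (3279/32768, 1), (6101/32768, 0)),
      (116/125, 73198/28937, 80951/125000, -93389/1250000, 145290/58427, 3656537/10000000,
       (3831/32768, 1), (20509/65536, 0), (2447/65536, 0), (7109/65536, 1), (5925/32768, 0)),
      (189/200, 147494/57325, 6564501/10000000, -565641/10000000, 146390/57877, 1774529/5000000,
       (8211/65536, 1), (10385/32768, 0), (1853/65536, 0), (7659/65536, 1), (11509/65536, 0)),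
      (481/500, 148590/56777, 665249/1000000, -96829/2500000, 9218/3583, 3445553/10000000,
       (8759/65536, 1), (21029/65536, 0), (1269/65536, 0), (513/4096, 1), (2795/16384, 0)),
      (979/1000, 149682/56231, 6739363/10000000, -42421/2000000, 37146/14195, 669011/2000000,
       (9305/65536, 1), (5321/16384, 0), (695/65536, 0), (2189/16384, 1), (2715/16384, 0)),
      (249/250, 75386/27843, 3412899/5000000, -19989/5000000, 74838/28117, 3248171/10000000,
       (4925/32768, 1), (21537/65536, 0), (131/65536, 0), (4651/32768, 1), (10551/65536, 0)),
      (1013/1000, 75930/27571, 138229/200000, 129397/10000000, 150766/55689, 630913/2000000,
       (5197/32768, 1), (21787/65536, 0), (53/8192, 0), (9847/65536, 1), (2563/16384, 0)),
      (103/100, 19118/6825, 874521/1250000, 295737/10000000, 151854/55145, 3063907/10000000,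
       (1367/8192, 1), (53/16384, 1), (969/65536, 0), (10391/65536, 1), (4981/32768, 0)),
      (1047/1000, 154026/54059, 3540047/5000000, 459371/10000000, 152938/54603, 2976183/10000000,
       (11477/65536, 1), (487/65536, 1), (1505/65536, 0), (10933/65536, 1), (9681/65536, 0))]"
    by (intro interval_chain.intros; simp add: hfun_cert_valid_def ln_cert_defs)
qed (use assms in simp_all)

lemma hfun_nonneg_from_1047_1000:
  assumes "1047/1000 \<le> L" "L \<le> 781/500"
  shows "0 \<le> hfun L"
proof (rule interval_chain_cover[OF _ hfun_cert_valid_nonneg])
  show "interval_chain hfun_cert_valid (1047/1000) [
      (133/125, 9694/3345, 7163719/10000000, 310311/5000000, 77010/27031, 180711/625000,
       (751/4096, 1), (761/65536, 1), (2033/65536, 0), (5737/32768, 1), (9409/65536, 0)),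
      (1081/1000, 78090/26491, 3623219/5000000, 778897/10000000, 155098/53523, 1404581/5000000,
       (6277/32768, 1), (129/8192, 1), (2551/65536, 0), (12013/65536, 1), (9145/65536, 0)),
      (549/500, 157250/52447, 7328251/10000000, 93513/1000000, 156174/52985, 34123/125000,
       (13089/65536, 1), (325/16384, 1), (1531/32768, 0), (12551/65536, 1), (4445/32768, 0)),
      (223/200, 158318/51913, 1852443/2500000, 1088721/10000000, 78622/26225, 1326389/5000000,
       (13623/65536, 1), (1567/65536, 1), (891/16384, 0), (6543/32768, 1), (4321/32768, 0)),
      (283/250, 159382/51381, 7490393/10000000, 123999/1000000, 39578/12979, 644569/2500000,
       (14155/65536, 1), (1831/65536, 1), (2029/32768, 0), (3405/16384, 1), (4201/32768, 0)),
      (1149/1000, 160442/50851, 378521/500000, 347237/2500000, 19922/6423, 100253/400000,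
       (14685/65536, 1), (2093/65536, 1), (71/1024, 0), (1769/8192, 1), (4085/32768, 0)),
      (1167/1000, 161562/50291, 3824929/5000000, 772253/5000000, 80218/25427, 304537/1250000,
       (15245/65536, 1), (2353/65536, 1), (5051/65536, 0), (7341/32768, 1), (993/8192, 0)),
      (237/200, 162674/49735, 7733291/10000000, 339497/2000000, 80778/25147, 118239/500000,
       (15801/65536, 1), (1313/32768, 1), (5549/65536, 0), (7621/32768, 1), (7713/65536, 0)),
      (1203/1000, 40946/12295, 7816141/10000000, 9241/50000, 81334/24869, 2295489/10000000,
       (4089/16384, 1), (2897/65536, 1), (6039/65536, 0), (7899/32768, 1), (7489/65536, 0)),
      (1221/1000, 164886/48629, 987263/1250000, 1996967/10000000, 163778/49183, 557181/2500000,
       (16907/65536, 1), (3165/65536, 1), (3261/32768, 0), (16353/65536, 1), (7273/65536, 0)),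
      (1239/1000, 165986/48079, 7979487/10000000, 267897/1250000, 20610/6079, 2163861/10000000,
       (17457/65536, 1), (3431/65536, 1), (1749/16384, 0), (2113/8192, 1), (7063/65536, 0)),
      (1257/1000, 167078/47533, 4029993/5000000, 45749/200000, 82990/24041, 2101203/10000000,
       (18003/65536, 1), (1847/32768, 1), (7463/65536, 0), (8727/32768, 1), (1715/16384, 0)),
      (51/40, 168166/46989, 1628043/2000000, 2429483/10000000, 10442/2971, 408149/2000000,
       (18547/65536, 1), (989/16384, 1), (3961/32768, 0), (1125/4096, 1), (833/8192, 0)),
      (1293/1000, 169250/46447, 2054891/2500000, 2569899/10000000, 10510/2937, 396373/2000000,
       (19089/65536, 1), (4215/65536, 1), (8375/65536, 0), (1159/4096, 1), (6473/65536, 0)),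
      (164/125, 170386/45879, 8298341/10000000, 135777/500000, 84622/23225, 77007/400000,
       (19657/65536, 1), (559/8192, 1), (2211/16384, 0), (9543/32768, 1), (6289/65536, 0)),
      (1331/1000, 85758/22657, 8380841/10000000, 7149/25000, 85190/22941, 1866977/10000000,
       (10111/32768, 1), (4741/65536, 1), (9307/65536, 0), (9827/32768, 1), (1525/16384, 0)),
      (27/20, 172638/44753, 1057847/1250000, 1500573/5000000, 171510/45317, 452741/2500000,
       (20783/65536, 1), (313/4096, 1), (9761/65536, 0), (20219/65536, 1), (2959/32768, 0)),
      (1369/1000, 86878/22097, 2136037/2500000, 628223/2000000, 43158/11189, 70273/400000,
       (10671/32768, 1), (5273/65536, 1), (10209/65536, 0), (5195/16384, 1), (2871/32768, 0)),
      (1389/1000, 131252/32723, 2156163/2500000, 3286091/10000000, 173750/44197, 213031/1250000,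
       (45/32768, 2), (5535/65536, 1), (667/4096, 0), (21339/65536, 1), (5571/65536, 0)),
      (1409/1000, 265124/64791, 8708593/10000000, 3428897/10000000, 262492/65449, 41277/250000,
       (745/65536, 2), (363/4096, 1), (11127/65536, 0), (87/65536, 2), (2699/32768, 0)),
      (1429/1000, 267748/64135, 4395991/5000000, 892461/2500000, 132556/32397, 799889/5000000,
       (1401/65536, 2), (6079/65536, 1), (11575/65536, 0), (371/32768, 2), (5231/65536, 0)),
      (29/20, 33812/7931, 8874511/10000000, 3715881/10000000, 133868/32069, 1550033/10000000,
       (261/8192, 2), (6347/65536, 1), (6019/32768, 0), (699/32768, 2), (5069/65536, 0)),
      (1471/1000, 273244/62761, 4480403/5000000, 192973/500000, 270484/63451, 374923/2500000,
       (2775/65536, 2), (6627/65536, 1), (3123/16384, 0), (2085/65536, 2), (4905/65536, 0)),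
      (1493/1000, 276124/62041, 4522971/5000000, 100197/250000, 68308/15691, 1451211/10000000,
       (3495/65536, 2), (6903/65536, 1), (405/2048, 0), (693/16384, 2), (4747/65536, 0)),
      (303/200, 278996/61323, 9134861/10000000, 1038547/2500000, 69028/15511, 701067/5000000,
       (4213/65536, 2), (7191/65536, 1), (3355/16384, 0), (873/16384, 2), (4587/65536, 0)),
      (769/500, 281996/60573, 922263/1000000, 4305089/10000000, 139492/30663, 677457/5000000,
       (4963/65536, 2), (7475/65536, 1), (13893/65536, 0), (2105/32768, 2), (4433/65536, 0)),
      (781/500, 17820/3737, 4656791/5000000, 4459681/10000000, 8812/1893, 326927/2500000,
       (359/4096, 2), (7769/65536, 1), (1797/8192, 0), (155/2048, 2), (4279/65536, 0))]"
    by (intro interval_chain.intros; simp add: hfun_cert_valid_def ln_cert_defs)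
qed (use assms in simp_all)

lemma hfun_nonneg_from_781_500:
  assumes "781/500 \<le> L" "L \<le> 4"
  shows "0 \<le> hfun L"
proof (rule interval_chain_cover[OF _ hfun_cert_valid_nonneg])
  show "interval_chain hfun_cert_valid (781/500) [
      (1587/1000, 72092/14745, 9407731/10000000, 230933/500000, 285108/59795, 9843/78125,
       (1639/16384, 2), (8073/65536, 1), (14871/65536, 0), (5741/65536, 2), (4123/65536, 0)),
      (1613/1000, 291740/58137, 9504781/10000000, 14941/31250, 288356/58983, 1212421/10000000,
       (7399/65536, 2), (4193/32768, 1), (15375/65536, 0), (6553/65536, 2), (31/512, 0)),
      (41/25, 295228/57265, 2401187/2500000, 61839/125000, 72932/14535, 582629/5000000,
       (8271/65536, 2), (2177/16384, 1), (993/4096, 0), (1849/16384, 2), (1907/32768, 0)),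
      (417/250, 74708/14091, 75841/78125, 1279099/2500000, 73804/14317, 1118107/10000000,
       (2293/16384, 2), (9039/65536, 1), (16409/65536, 0), (2067/16384, 2), (915/16384, 0)),
      (1697/1000, 151276/27717, 9813187/10000000, 5288681/10000000, 298820/56367, 1071581/10000000,
       (5051/32768, 2), (4689/32768, 1), (16937/65536, 0), (9169/65536, 2), (877/16384, 0)),
      (216/125, 306508/54445, 9921381/10000000, 109399/200000, 302540/55437, 1025373/10000000,
       (11091/65536, 2), (9725/65536, 1), (8745/32768, 0), (10099/65536, 2), (3357/65536, 0)),
      (44/25, 310572/53429, 627211/625000, 5653421/10000000, 19156/3403, 97887/1000000,
       (12107/65536, 2), (5045/32768, 1), (18047/65536, 0), (693/4096, 2), (3205/65536, 0)),
      (897/500, 314860/52357, 2538019/2500000, 1168959/2000000, 38820/6679, 932683/10000000,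
       (13179/65536, 2), (10463/65536, 1), (18625/65536, 0), (1513/8192, 2), (1527/32768, 0)),
      (183/100, 319372/51229, 5137321/5000000, 241729/400000, 39356/6545, 221703/2500000,
       (14307/65536, 2), (5427/32768, 1), (19221/65536, 0), (1647/8192, 2), (363/8192, 0)),
      (467/250, 2532/391, 10402489/10000000, 6248863/10000000, 9980/1601, 420169/5000000,
       (121/512, 2), (11261/65536, 1), (19835/65536, 0), (447/2048, 2), (43/1024, 0)),
      (1909/1000, 164572/24393, 421439/400000, 3232967/5000000, 324084/50051, 397243/5000000,
       (8375/32768, 2), (11685/65536, 1), (20479/65536, 0), (15485/65536, 2), (1301/32768, 0)),
      (1953/1000, 167252/23723, 2135599/2000000, 1673421/2500000, 329132/48789, 74803/1000000,
       (9045/32768, 2), (12135/65536, 1), (10575/32768, 0), (16747/65536, 2), (1225/32768, 0)),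
      (2001/1000, 340276/46003, 2165599/2000000, 6936661/10000000, 334492/47449, 701277/10000000,
       (19533/65536, 2), (12609/65536, 1), (17/65536, 1), (18087/65536, 2), (2297/65536, 0)),
      (2053/1000, 346436/44463, 10989237/10000000, 7193023/10000000, 170132/23003, 4087/62500,
       (21073/65536, 2), (13117/65536, 1), (857/65536, 1), (9765/32768, 2), (1071/32768, 0)),
      (211/100, 532312/64533, 11161209/10000000, 466699/625000, 173212/22233, 606571/10000000,
       (1003/65536, 3), (13657/65536, 1), (1755/65536, 1), (10535/32768, 2), (1987/65536, 0)),
      (543/250, 68568/7813, 709123/625000, 310261/400000, 66536/8067, 558923/10000000,
       (379/8192, 3), (14235/65536, 1), (1351/32768, 1), (125/8192, 3), (1831/65536, 0)),
      (2241/1000, 141640/15063, 11543373/10000000, 8069479/10000000, 548520/62507, 511587/10000000,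
       (1321/16384, 3), (7425/32768, 1), (3725/65536, 1), (3029/65536, 3), (419/16384, 0)),
      (1159/500, 293272/28877, 11758797/10000000, 8407229/10000000, 566536/60255, 463951/10000000,
       (3891/32768, 3), (7759/32768, 1), (4827/65536, 1), (5281/65536, 3), (95/4096, 0)),
      (481/200, 38056/3435, 11993529/10000000, 8775671/10000000, 586520/57757, 1301/31250,
       (661/4096, 3), (8121/32768, 1), (3013/32768, 1), (7779/65536, 3), (341/16384, 0)),
      (501/200, 634200/51797, 12252211/10000000, 9183063/10000000, 608872/54963, 73739/2000000,
       (13739/65536, 3), (17035/65536, 1), (7347/65536, 1), (10573/65536, 3), (151/8192, 0)),
      (131/50, 662648/48241, 6270829/5000000, 9631783/10000000, 79272/6475, 321073/10000000,
       (17295/65536, 3), (4479/16384, 1), (8795/65536, 1), (1717/8192, 3), (263/16384, 0)),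
      (1377/500, 86840/5529, 2572937/2000000, 10130787/10000000, 165656/12061, 274371/10000000,
       (2663/8192, 3), (18891/65536, 1), (10395/65536, 1), (4323/16384, 3), (899/65536, 0)),
      (1457/500, 280656/15227, 1653509/1250000, 10695381/10000000, 694696/44235, 228587/10000000,
       (1157/16384, 4), (19977/65536, 1), (6095/32768, 1), (21301/65536, 3), (749/65536, 0)),
      (1553/500, 1221808/54709, 6822629/5000000, 11333481/10000000, 1122576/60911, 184637/10000000,
       (10827/65536, 4), (21209/65536, 1), (3549/16384, 1), (4625/65536, 4), (605/65536, 0)),
      (167/50, 1338352/47425, 7062093/5000000, 3014979/2500000, 152720/6839, 35859/2500000,
       (18111/65536, 4), (107/8192, 2), (8223/32768, 1), (1353/8192, 4), (235/32768, 0)),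
      (1817/500, 1136608/30017, 14678517/10000000, 12903651/10000000, 334576/11857, 13199/1250000,
       (2751/32768, 5), (2671/65536, 2), (297/1024, 1), (4527/16384, 4), (173/32768, 0)),
      (4, 2644448/48433, 7667047/5000000, 2772589/2000000, 2273120/60037, 72633/10000000,
       (17103/65536, 5), (1203/16384, 2), (0, 2), (5499/65536, 5), (119/32768, 0))]"
    by (intro interval_chain.intros; simp add: hfun_cert_valid_def ln_cert_defs)
qed (use assms in simp_all)

lemma exp_le_inverse_one_minus:
  fixes L :: real
  assumes "L < 1"
  shows "exp L \<le> 1 / (1 - L)"
proof -
  have "1 - L \<le> exp (- L)" using exp_ge_add_one_self[of "- L"] by simp
  then have "1 / exp (- L) \<le> 1 / (1 - L)" using assms by (intro divide_left_mono) auto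
  then show ?thesis by (simp add: exp_minus inverse_eq_divide)
qed

lemma exp_minus_one_le: "exp L - 1 \<le> L * exp L" for L :: real
proof -
  have "1 - L \<le> exp (- L)" using exp_ge_add_one_self[of "- L"] by simp
  then have "(1 - L) * exp L \<le> exp (- L) * exp L" by (intro mult_right_mono) auto
  then show ?thesis by (simp add: algebra_simps exp_minus_inverse)
qed

lemma minus_mult_ln_le:
  fixes x :: real
  assumes "0 < x"
  shows "- (x * ln x) \<le> 1/10 + 8 * x"
proof -
  have "ln (1 / (10 * x)) \<le> 1 / (10 * x) - 1" using assms by (intro ln_le_minus_one) auto
  moreover have "ln (1 / (10 * x)) = - ln 10 - ln x" using assms by (simp add: ln_div ln_mult)
  moreover have "ln (10::real) \<le> 9" using ln_le_minus_one[of 10] by simp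
  ultimately have "- ln x \<le> 1 / (10 * x) + 8" by linarith
  then have "x * (- ln x) \<le> x * (1 / (10 * x) + 8)" using assms by (intro mult_left_mono) auto
  moreover have "x * (1 / (10 * x) + 8) = 1/10 + 8 * x" using assms by (simp add: field_simps)
  ultimately show ?thesis by simp
qed

lemma hfun_nonneg_near_zero:
  assumes "0 < L" "L \<le> 1/50"
  shows "0 \<le> hfun L"
proof -
  define z where "z = L * exp L"
  have z: "0 \<le> z" using assms by (simp add: z_def)
  have "exp L \<le> 1 / (1 - L)" using assms by (intro exp_le_inverse_one_minus) simp
  also have "\<dots> \<le> 50/49" using assms by (simp add: field_simps)
  finally have E: "exp L \<le> 50/49" .
  have "(1 + z) * ln (1 + z) \<le> (1 + z) * z"
    using z by (intro mult_left_mono ln_add_one_self_le_self) auto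
  then have "(1 + z) * ln (1 + z) / L \<le> (1 + z) * z / L" using assms by (intro divide_right_mono) auto
  also have "\<dots> = exp L + z * exp L" using assms by (simp add: z_def field_simps)
  finally have Q1: "(1 + z) * ln (1 + z) / L \<le> exp L + z * exp L" .
  have "z * exp L - z = z * (exp L - 1)" by (simp add: algebra_simps)
  also have "\<dots> \<le> z * (L * exp L)" using exp_minus_one_le z by (intro mult_left_mono) auto
  also have "\<dots> = (L * L) * (exp L * exp L)" by (simp add: z_def)
  also have "\<dots> \<le> (1/50 * (1/50)) * (50/49 * (50/49))"
    using assms E by (intro mult_mono) auto
  finally have Q2: "z * exp L - z \<le> 1/2401" by simp
  have "(L * exp L) * ln L \<le> (exp L - 1) * ln L"
    using exp_minus_one_le[of L] assms by (intro mult_right_mono_neg) auto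
  moreover have "exp L * (- (L * ln L)) \<le> 50/49 * (1/10 + 8 * (1/50))"
    using minus_mult_ln_le[OF assms(1)] assms E
    by (intro mult_mono) (auto simp: mult_nonneg_nonpos)
  moreover have "(L * exp L) * ln L = - (exp L * (- (L * ln L)))" by simp
  ultimately have P: "- (13/49) \<le> (exp L - 1) * ln L" by simp
  have Q: "- exp L - 1/2401 \<le> z - (1 + z) * ln (1 + z) / L" using Q1 Q2 by linarith
  have R: "0 \<le> exp (- L) / 12 + ln (1 + L)" using assms by simp
  have "hfun L = 1 + 14/25 - 1/12 + (exp (- L) / 12 + ln (1 + L)) + (exp L - 1) * ln L
      + (z - (1 + z) * ln (1 + z) / L)"
    using hfun_alt[OF assms(1)] by (simp add: z_def)
  with P Q R E show ?thesis by linarith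
qed

lemma exp_one_ge: "2718/1000 \<le> exp (1::real)"
proof (rule le_exp_of_ln_le)
  have "ln_le_cert (761/5000, 1) (2718/1000) 1" by (simp add: ln_cert_defs)
  then show "0 < (2718/1000::real)" "ln (2718/1000) \<le> (1::real)" by (rule ln_le_cert_sound)+
qed

lemma ln_div_self_le: "0 < x \<Longrightarrow> ln x / x \<le> 1000/2718" for x :: real
proof -
  assume x: "0 < x"
  have "ln (x / exp 1) \<le> x / exp 1 - 1" using x by (intro ln_le_minus_one) auto
  then have "ln x \<le> x / exp 1" using x by (simp add: ln_div)
  also have "\<dots> \<le> x / (2718/1000)" using exp_one_ge x by (intro divide_left_mono) auto
  finally show ?thesis using x by (simp add: field_simps)
qed

lemma hfun_nonneg_beyond_4:
  assumes "4 \<le> L"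
  shows "0 \<le> hfun L"
proof -
  define z where "z = L * exp L"
  have L: "0 < L" using assms by simp
  have "5 \<le> exp L" using exp_ge_add_one_self[of L] assms by linarith
  then have "4 * 5 * 4 \<le> z * L" unfolding z_def using assms by (intro mult_mono) auto
  moreover have "0 < z" using L by (simp add: z_def)
  ultimately have zL: "0 < z" "1 / (z * L) \<le> 1/80" by (auto simp: field_simps)
  have "(1 + z) * ln (1 + 1/z) \<le> (1 + z) * (1/z)"
    using zL by (intro mult_left_mono ln_add_one_self_le_self) auto
  then have "(1 + z) * ln (1 + 1/z) / L \<le> (1 + z) * (1/z) / L" using L by (intro divide_right_mono) auto
  also have "\<dots> = 1/L + 1/(z * L)" using zL L by (simp add: field_simps)
  finally have Q: "(1 + z) * ln (1 + 1/z) / L \<le> 1/L + 1/(z * L)" .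
  have "ln (L / (L + 1)) \<le> L / (L + 1) - 1" using L by (intro ln_le_minus_one) auto
  then have "1 / (L + 1) \<le> ln (1 + L) - ln L" using L by (simp add: ln_div field_simps)
  moreover have "1/L - 1/(L + 1) \<le> 1/20"
  proof -
    have "4 * 5 \<le> L * (L + 1)" using assms by (intro mult_mono) auto
    then show ?thesis using L by (simp add: field_simps)
  qed
  moreover have "(1 + 1/L) * ln L = ln L + ln L / L" by (simp add: algebra_simps)
  moreover have "0 \<le> exp (- L) / 12" by simp
  ultimately show ?thesis
    using Q zL ln_div_self_le[OF L] unfolding hfun_def z_def[symmetric] by linarith
qed

lemma hfun_nonneg:
  assumes "0 < L"
  shows "0 \<le> hfun L"
proof -
  consider "L \<le> 1/50" | "1/50 \<le> L" "L \<le> 37/100" | "37/100 \<le> L" "L \<le> 3/5"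
    | "3/5 \<le> L" "L \<le> 1047/1000" | "1047/1000 \<le> L" "L \<le> 781/500"
    | "781/500 \<le> L" "L \<le> 4" | "4 \<le> L"
    by linarith
  then show ?thesis
    using assms hfun_nonneg_near_zero hfun_nonneg_from_1_50 hfun_nonneg_from_37_100
      hfun_nonneg_from_3_5 hfun_nonneg_from_1047_1000 hfun_nonneg_from_781_500
      hfun_nonneg_beyond_4
    by cases blast+
qed

section \<open>The redundancy bound\<close>

lemma hfun_eq:
  assumes "0 < L"
  shows "hfun L = 14/25 - 1/12 + 1/(12 * exp L) + ln (1 + L) - (1 + 1/L) * ln L
    - (1 + L * exp L) * (ln (1 + L * exp L) - ln L - L) / L"
proof -
  have "ln (1 + 1/(L * exp L)) = ln (1 + L * exp L) - ln L - L"
    using assms by (simp add: ln_one_plus_inverse ln_mult)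
  then show ?thesis by (simp add: hfun_def exp_minus inverse_eq_divide)
qed

lemma le_ln_one_plus_mult_exp:
  fixes L :: real
  assumes "0 \<le> L"
  shows "L \<le> ln (1 + L * exp L)"
proof -
  have "exp L \<le> 1 + L * exp L" using exp_minus_one_le[of L] by simp
  then show ?thesis using assms by (simp add: ln_ge_iff add_pos_nonneg)
qed

text \<open>The slack of the final estimate equals \<open>m * hfun L\<close> plus nonnegative terms, where
  \<open>lm = ln m\<close>, \<open>E = n/m = exp L\<close>, \<open>lL = ln L\<close>, \<open>l1L = ln (1 + L)\<close> and \<open>l1z = ln (1 + L * E)\<close>.\<close>

lemma slack_identity:
  fixes m L E lm lL l1z l1L :: real
  assumes "L \<noteq> 0" "E \<noteq> 0" "m \<noteq> 0"
  shows "(- (m - 1/2) * lm - (lm + L)/2 + m * l1L + 14/25 * m + 82/1000)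
      - (- (m * E) * (lm + L) + m * E - 11/12 * m - m^2 / (12 * (m * E)) - m * (lm - lL)
         + ((m * E + m/L - 1/2) * (lm + l1z - lL) - (m/L - 1/2) * (lm - lL) - m * E))
    = m * ((14/25 - 1/12) + 1/(12 * E) + l1L - (1 + 1/L) * lL - (1 + L * E) * (l1z - lL - L) / L)
      + 82/1000 + (l1z - L)/2"
  using assms by (simp add: field_simps power2_eq_square)

lemma redundancy_main_estimate:
  fixes m n :: real
  assumes "1 \<le> m" "m < n"
  shows "- n * ln n + n - 11/12 * m - m^2 / (12 * n) - m * ln (m / ln (n / m))
      + ((n + m / ln (n / m) - 1/2) * ln (n + m / ln (n / m))
         - (m / ln (n / m) - 1/2) * ln (m / ln (n / m)) - n)
    \<le> - (m - 1/2) * ln m - ln n / 2 + m * ln (ln (exp 1 * n / m)) + 0.56 * m + 0.082"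
proof -
  define L where "L = ln (n / m)"
  define E where "E = exp L"
  define z where "z = L * E"
  have m: "0 < m" and L: "0 < L" and E: "0 < E" and z: "0 < z"
    using assms by (simp_all add: L_def E_def z_def)
  have n: "n = m * E" using m assms(2) by (simp add: E_def L_def)
  have ln_n: "ln n = ln m + L" using m by (simp add: n E_def ln_mult)
  have ln_\<beta>: "ln (m / L) = ln m - ln L" using m L by (simp add: ln_div)
  have "n + m / L = m * (1 + z) / L" using L by (simp add: n z_def field_simps)
  then have ln_n\<beta>: "ln (n + m / L) = ln m + ln (1 + z) - ln L"
    using m L z by (simp add: ln_mult ln_div)
  have ln_ln: "ln (ln (exp 1 * n / m)) = ln (1 + L)"
    using m by (simp add: n E_def exp_add[symmetric])
  have "L \<noteq> 0" "E \<noteq> 0" "m \<noteq> 0" using L E m by simp_all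
  note slack = slack_identity[where m = m and L = L and E = E and lm = "ln m" and lL = "ln L"
      and l1z = "ln (1 + z)" and l1L = "ln (1 + L)", OF this]
  have "0 \<le> m * hfun L" using hfun_nonneg[OF L] m by simp
  moreover have "L \<le> ln (1 + z)" using le_ln_one_plus_mult_exp L by (simp add: z_def E_def)
  ultimately have "0 \<le> (- (m - 1/2) * ln m - (ln m + L)/2 + m * ln (1 + L) + 14/25 * m + 82/1000)
      - (- (m * E) * (ln m + L) + m * E - 11/12 * m - m^2 / (12 * (m * E)) - m * (ln m - ln L)
         + ((m * E + m/L - 1/2) * (ln m + ln (1 + z) - ln L) - (m/L - 1/2) * (ln m - ln L) - m * E))"
    unfolding slack hfun_eq[OF L] E_def[symmetric] z_def[symmetric] by simp
  then show ?thesis unfolding L_def[symmetric] ln_\<beta> ln_n\<beta> ln_ln ln_n n[symmetric] by simp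
qed

lemma redundancy_S_seq_le:
  assumes "1 \<le> n" "card (seen x n) < n"
    and w: "\<And>t. t < n \<Longrightarrow> x (t + 1) \<notin> seen x t \<Longrightarrow> 0 < w t (x (t + 1))"
  defines "m \<equiv> card (seen x n)"
  shows "redundancy x n (S_seq (real m / ln (real n / real m)) w x n)
    \<le> CL w x n - (real m - 1/2) * ln (real m) + (\<Sum>j\<in>seen x n. ln (real (cnt x n j)) / 2)
      - ln (real n) / 2 + real m * ln (ln (exp 1 * real n / real m)) + 0.56 * real m + 0.082"
proof -
  define \<beta> where "\<beta> = real m / ln (real n / real m)"
  have "x 1 \<in> seen x n" using assms(1) by (auto simp: seen_def)
  then have "1 \<le> m" by (auto simp: m_def Suc_le_eq card_gt_0_iff finite_seen)
  then have "0 < \<beta>" using assms(2) by (simp add: \<beta>_def m_def)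
  have "redundancy x n (S_seq \<beta> w x n) = CL w x n - real n * ln (real n)
      + (\<Sum>j\<in>seen x n. real (cnt x n j) * ln (real (cnt x n j)) - ln (fact (cnt x n j - 1)))
      + (\<Sum>t<n. ln (real t + \<beta>)) - real m * ln \<beta>"
    using ln_S_seq[where n = n and x = x and w = w, OF \<open>0 < \<beta>\<close> w]
      ln_empirical_likelihood[OF assms(1)]
    by (simp add: redundancy_def m_def sum_subtractf)
  also have "\<dots> \<le> CL w x n - real n * ln (real n)
      + ((\<Sum>j\<in>seen x n. ln (real (cnt x n j)) / 2) + real n - 11/12 * m - real m^2 / (12 * n))
      + ((real n + \<beta> - 1/2) * ln (real n + \<beta>) - (\<beta> - 1/2) * ln \<beta> - real n) - real m * ln \<beta>"
    using sum_count_terms_le[OF finite_seen _ sum_cnt, of x n] sum_ln_shift_le[OF \<open>0 < \<beta>\<close>, of n]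
      cnt_pos_iff[of x n] assms(1)
    by (force simp: m_def Suc_le_eq intro!: add_mono diff_mono)
  also have "\<dots> \<le> CL w x n - (real m - 1/2) * ln (real m) + (\<Sum>j\<in>seen x n. ln (real (cnt x n j)) / 2)
      - ln (real n) / 2 + real m * ln (ln (exp 1 * real n / real m)) + 0.56 * real m + 0.082"
    using redundancy_main_estimate[of "real m" "real n"] \<open>1 \<le> m\<close> assms(2)
    unfolding \<beta>_def m_def[symmetric] by linarith
  finally show ?thesis by (simp add: \<beta>_def)
qed

lemma redundancy_S_inf_seq:
  assumes "1 \<le> n" "card (seen x n) = n"
    and w: "\<And>t. t < n \<Longrightarrow> x (t + 1) \<notin> seen x t \<Longrightarrow> 0 < w t (x (t + 1))"
  shows "redundancy x n (S_inf_seq w x n) = CL w x n - real n * ln (real n)"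
proof -
  have inj: "inj_on x {1..n}" using assms(2) by (intro eq_card_imp_inj_on) (auto simp: seen_def)
  have new: "x (t + 1) \<notin> seen x t" if "t < n" for t
  proof
    assume "x (t + 1) \<in> seen x t"
    then obtain s where s: "s \<in> {1..t}" "x s = x (t + 1)" by (auto simp: seen_def)
    then have "s = t + 1" using inj that by (intro inj_onD[OF inj]) auto
    with s show False by simp
  qed
  have "cnt x n j = 1" if j: "j \<in> seen x n" for j
  proof -
    obtain s where s: "s \<in> {1..n}" "j = x s" using j unfolding seen_def by blast
    have "{s' \<in> {1..n}. x s' = j} = {s}"
    proof (intro equalityI subsetI)
      fix s' assume "s' \<in> {s' \<in> {1..n}. x s' = j}"
      then show "s' \<in> {s}" using s inj_onD[OF inj, of s' s] by auto
    qed (use s in auto)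
    then show ?thesis by (simp add: cnt_def)
  qed
  then have "(\<Sum>j\<in>seen x n. real (cnt x n j) * ln (real (cnt x n j))) = 0" by simp
  moreover have "S_inf_seq w x n = (\<Prod>t<n. w t (x (t + 1)))"
    unfolding S_inf_seq_def S_inf_cond_def
    using new cnt_pos_iff[of x] by (intro prod.cong) auto
  moreover have "ln (\<Prod>t<n. w t (x (t + 1))) = (\<Sum>t<n. ln (w t (x (t + 1))))"
    using w new by (intro ln_prod) (auto simp: less_imp_neq[symmetric])
  moreover have "CL w x n = - (\<Sum>t<n. ln (w t (x (t + 1))))"
  proof -
    have "{t. t < n \<and> x (t + 1) \<notin> seen x t} = {..<n}" using new by auto
    then show ?thesis using CL_eq_sum_ln[where n = n and x = x and w = w, OF w] by simp
  qed
  ultimately show ?thesis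
    using ln_empirical_likelihood[OF assms(1), of x] by (simp add: redundancy_def)
qed

theorem theorem4:
  fixes X :: "'a set" and x :: "nat \<Rightarrow> 'a" and w :: "nat \<Rightarrow> 'a \<Rightarrow> real" and n :: nat
  assumes "finite X"
    and "n \<ge> 1"
    and "\<And>t. t \<in> {1..n} \<Longrightarrow> x t \<in> X"
    and "\<And>t i. t \<le> n \<Longrightarrow> i \<in> X - seen x t \<Longrightarrow> w t i > 0"
    and "\<And>t. t \<le> n \<Longrightarrow> (\<Sum>k\<in>X - seen x t. w t k) \<le> 1"
  shows "let m = card (seen x n);
             R = (if m < n then redundancy x n (S_seq (real m / ln (real n / real m)) w x n)
                  else redundancy x n (S_inf_seq w x n))
         in R \<le> CL w x n - (real m - 1/2) * ln (real m)
                 + (\<Sum>j\<in>seen x n. ln (real (cnt x n j)) / 2) - ln (real n) / 2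
                 + real m * ln (ln (exp 1 * real n / real m)) + 0.56 * real m + 0.082"
proof -
  have w: "0 < w t (x (t + 1))" if "t < n" "x (t + 1) \<notin> seen x t" for t
    using that assms(3)[of "t + 1"] assms(4)[of t "x (t + 1)"] by simp
  show ?thesis
  proof (cases "card (seen x n) < n")
    case True
    then show ?thesis using redundancy_S_seq_le[where x = x and n = n and w = w, OF assms(2) True w]
      by simp
  next
    case False
    then have "card (seen x n) = n" using card_seen_le[of x n] by simp
    moreover have "ln (ln (exp 1 * real n / real n)) = 0" using assms(2) by simp
    moreover have "(\<Sum>j\<in>seen x n. ln (real (cnt x n j)) / 2) \<ge> 0"
      using cnt_pos_iff[of x n] by (intro sum_nonneg) (simp add: Suc_le_eq)
    ultimately show ?thesis
      using redundancy_S_inf_seq[where x = x and n = n and w = w, OF assms(2) _ w]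
      by (simp add: algebra_simps)
  qed
qed

end
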